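(* Let $d\ge 2$ be an even integer. For the problem on the network $\mathscr{G}_d$ in which each $w_i$ ($i\in\{0,1,2\}$) receives an input bit $b_i$ and each $v_j$ ($j\in\{0,\dots,3d-1\}$) must output a bit $x_j$ such that $(x_0,\dots,x_{3d-1})\in\Lambda_d(b_0,b_1,b_2)$: there exists a $2$-round quantum LOCAL algorithm that always outputs a valid string; and for any integer $T\le d/2$, no $T$-round classical LOCAL algorithm can output a valid string with probability greater than $7/8$ on all inputs $(b_0,b_1,b_2)\in\{0,1\}^3$, even if arbitrary prior randomness shared among the nodes is allowed.
   Context: For even $d\ge2$, $G_d$ is the cycle on nodes $v_0,v_1,\dots,v_{3d-1}$ with edges $\{v_j,v_{j+1}\}$ (indices mod $3d$). The network $\mathscr{G}_d$ has node set $\{v_0,\dots,v_{3d-1}\}\cup\{w_0,w_1,w_2\}$ and the edges of $G_d$ together with $\{v_0,w_0\},\{v_d,w_1\},\{v_{2d},w_2\}$. Graph state of a graph: one qubit register per node initialized to $|0\rangle$, Hadamard $\mathrm{H}=\frac1{\sqrt2}\begin{pmatrix}1&1\\1&-1\end{pmatrix}$ applied to each, then $\mathrm{CZ}=\mathrm{diag}(1,1,1,-1)$ applied to each pair of registers forming an edge. For bits $b_0,b_1,b_2$ the process $\mathscr{P}_d(b_0,b_1,b_2)$ is: (1) create the graph state of $G_d$; (2) for each $i\in\{0,1,2\}$ apply $\mathrm{S}^{b_i}$ to the qubit of $v_{di}$, where $\mathrm{S}=\mathrm{diag}(1,i)$; (3) apply $\mathrm{H}$ to every qubit; (4) measure all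 qubits in the computational basis, obtaining $m\in\{0,1\}^{3d}$ whose $j$-th bit is the outcome at $v_j$. $\Lambda_d(b_0,b_1,b_2)\subseteq\{0,1\}^{3d}$ is the set of outcomes occurring with nonzero probability. LOCAL model: synchronous rounds, each node (with distinct identifier, knowing its incident edges and the number of nodes) may do arbitrary local computation and send one unbounded-size message per neighbour per round; classical: probabilistic processors and classical messages; quantum: quantum processors and quantum messages; no initial shared entanglement (and, unless stated, no shared randomness). *)

theory Defs
  imports "HOL-Probability.Probability"
begin

text \<open>A computational basis state is a
bit assignment (nat => bool); a (pure) state vector assigns a complex amplitude to
every basis state. Only basis states that are False outside the qubits in use
ever carry nonzero amplitude.\<close>

type_synonym bits = "nat \<Rightarrow> bool"
type_synonym qstate = "bits \<Rightarrow> complex"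
type_synonym qop = "bits \<Rightarrow> bits \<Rightarrow> complex"

definition conf :: "nat set \<Rightarrow> bits set" where
  "conf S = {x. \<forall>q. q \<notin> S \<longrightarrow> \<not> x q}"

definition restr :: "bits \<Rightarrow> nat set \<Rightarrow> bits" where
  "restr x S = (\<lambda>q. q \<in> S \<and> x q)"

text \<open>Apply the operator with matrix u (indexed by basis states of the qubits in S)
to the qubits in S, acting as the identity on all other qubits.\<close>
definition apply_on :: "nat set \<Rightarrow> qop \<Rightarrow> qstate \<Rightarrow> qstate" where
  "apply_on S u \<psi> =
     (\<lambda>x. \<Sum>y\<in>{y. \<forall>q. q \<notin> S \<longrightarrow> y q = x q}. u (restr x S) (restr y S) * \<psi> y)"

definition unitary_on :: "nat set \<Rightarrow> qop \<Rightarrow> bool" where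
  "unitary_on S u \<longleftrightarrow> finite S \<and>
     (\<forall>a\<in>conf S. \<forall>b\<in>conf S.
        (\<Sum>c\<in>conf S. cnj (u c a) * u c b) = (if a = b then 1 else 0))"

definition ket0 :: qstate where
  "ket0 = (\<lambda>x. if (\<forall>q. \<not> x q) then 1 else 0)"

definition hgate :: "nat \<Rightarrow> qop" where
  "hgate k = (\<lambda>a b. (if a k \<and> b k then -1 else 1) / complex_of_real (sqrt 2))"

definition sgate :: "nat \<Rightarrow> qop" where
  "sgate k = (\<lambda>a b. if a = b then (if a k then \<i> else 1) else 0)"

definition czgate :: "nat \<Rightarrow> nat \<Rightarrow> qop" where
  "czgate j k = (\<lambda>a b. if a = b then (if a j \<and> a k then -1 else 1) else 0)"

definition apply_H :: "nat \<Rightarrow> qstate \<Rightarrow> qstate" where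
  "apply_H k = apply_on {k} (hgate k)"

definition apply_S :: "nat \<Rightarrow> qstate \<Rightarrow> qstate" where
  "apply_S k = apply_on {k} (sgate k)"

definition apply_CZ :: "nat \<Rightarrow> nat \<Rightarrow> qstate \<Rightarrow> qstate" where
  "apply_CZ j k = apply_on {j, k} (czgate j k)"

text \<open>Node v_j of G_d is qubit j, for j < 3d.\<close>
definition cycle_edges :: "nat \<Rightarrow> (nat \<times> nat) list" where
  "cycle_edges d = map (\<lambda>j. (j, Suc j mod (3 * d))) [0..<3 * d]"

definition graph_state :: "nat \<Rightarrow> qstate" where
  "graph_state d =
     fold (\<lambda>(j, k). apply_CZ j k) (cycle_edges d)
       (fold apply_H [0..<3 * d] ket0)"

definition process_state :: "nat \<Rightarrow> bool \<Rightarrow> bool \<Rightarrow> bool \<Rightarrow> qstate" where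
  "process_state d b0 b1 b2 =
     (let bs = [b0, b1, b2];
          \<psi>2 = fold (\<lambda>i. if bs ! i then apply_S (d * i) else id) [0..<3] (graph_state d)
      in fold apply_H [0..<3 * d] \<psi>2)"

text \<open>Outcomes m in {0,1}^(3d), represented as bit assignments false beyond 3d;
m j is the outcome at v_j. Nonzero probability iff nonzero amplitude.\<close>
definition Lambda :: "nat \<Rightarrow> bool \<Rightarrow> bool \<Rightarrow> bool \<Rightarrow> bits set" where
  "Lambda d b0 b1 b2 = {m \<in> conf {..<3 * d}. process_state d b0 b1 b2 m \<noteq> 0}"

text \<open>Nodes: v_j is j (j < 3d), w_i is 3d + i (i < 3).\<close>
definition net_nodes :: "nat \<Rightarrow> nat set" where
  "net_nodes d = {..<3 * d + 3}"

definition net_adj :: "nat \<Rightarrow> nat \<Rightarrow> nat \<Rightarrow> bool" where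
  "net_adj d u v \<longleftrightarrow>
     (u < 3 * d \<and> v < 3 * d \<and> (v = Suc u mod (3 * d) \<or> u = Suc v mod (3 * d))) \<or>
     (\<exists>i<3. (u = d * i \<and> v = 3 * d + i) \<or> (v = d * i \<and> u = 3 * d + i))"

definition net_input :: "nat \<Rightarrow> bool \<Rightarrow> bool \<Rightarrow> bool \<Rightarrow> nat \<Rightarrow> bool" where
  "net_input d b0 b1 b2 v =
     (if v = 3 * d then b0 else if v = 3 * d + 1 then b1 else if v = 3 * d + 2 then b2 else False)"

text \<open>A quantum LOCAL algorithm uses N qubits (0..N-1), all initialised to |0>;
qubit q initially resides at node home q (no shared entanglement). In each step
t = 0..T, every node v applies a unitary U t v b (b = its input bit) to the qubits
it currently holds; after step t < T (i.e. in communication round t+1) every qubit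
is either kept or sent to a neighbour, its new location being mv t q. After the
final local step T every node measures its qubits in the computational basis and
node v_j outputs out j applied to the outcomes of the qubits it holds.\<close>

definition qloc :: "(nat \<Rightarrow> nat) \<Rightarrow> (nat \<Rightarrow> nat \<Rightarrow> nat) \<Rightarrow> nat \<Rightarrow> nat \<Rightarrow> nat" where
  "qloc home mv t q = (if t = 0 then home q else mv (t - 1) q)"

definition held :: "nat \<Rightarrow> (nat \<Rightarrow> nat) \<Rightarrow> (nat \<Rightarrow> nat \<Rightarrow> nat) \<Rightarrow> nat \<Rightarrow> nat \<Rightarrow> nat set" where
  "held N home mv t v = {q. q < N \<and> qloc home mv t q = v}"

definition qlocal_valid ::
  "nat \<Rightarrow> nat \<Rightarrow> nat \<Rightarrow> (nat \<Rightarrow> nat) \<Rightarrow> (nat \<Rightarrow> nat \<Rightarrow> nat) \<Rightarrow>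
   (nat \<Rightarrow> nat \<Rightarrow> bool \<Rightarrow> qop) \<Rightarrow> bool" where
  "qlocal_valid d T N home mv U \<longleftrightarrow>
     (\<forall>q<N. home q \<in> net_nodes d) \<and>
     (\<forall>t<T. \<forall>q<N. mv t q = qloc home mv t q \<or> net_adj d (qloc home mv t q) (mv t q)) \<and>
     (\<forall>t\<le>T. \<forall>v\<in>net_nodes d. \<forall>b. unitary_on (held N home mv t v) (U t v b))"

definition qstep ::
  "nat \<Rightarrow> nat \<Rightarrow> (nat \<Rightarrow> nat) \<Rightarrow> (nat \<Rightarrow> nat \<Rightarrow> nat) \<Rightarrow> (nat \<Rightarrow> nat \<Rightarrow> bool \<Rightarrow> qop) \<Rightarrow>
   (nat \<Rightarrow> bool) \<Rightarrow> nat \<Rightarrow> qstate \<Rightarrow> qstate" where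
  "qstep d N home mv U inp t \<psi> =
     fold (\<lambda>v. apply_on (held N home mv t v) (U t v (inp v))) [0..<3 * d + 3] \<psi>"

fun qrun ::
  "nat \<Rightarrow> nat \<Rightarrow> (nat \<Rightarrow> nat) \<Rightarrow> (nat \<Rightarrow> nat \<Rightarrow> nat) \<Rightarrow> (nat \<Rightarrow> nat \<Rightarrow> bool \<Rightarrow> qop) \<Rightarrow>
   (nat \<Rightarrow> bool) \<Rightarrow> nat \<Rightarrow> qstate" where
  "qrun d N home mv U inp 0 = qstep d N home mv U inp 0 ket0"
| "qrun d N home mv U inp (Suc t) = qstep d N home mv U inp (Suc t) (qrun d N home mv U inp t)"

definition qoutput ::
  "nat \<Rightarrow> nat \<Rightarrow> (nat \<Rightarrow> nat) \<Rightarrow> (nat \<Rightarrow> nat \<Rightarrow> nat) \<Rightarrow> nat \<Rightarrow> (nat \<Rightarrow> bits \<Rightarrow> bool) \<Rightarrow>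
   bits \<Rightarrow> bits" where
  "qoutput d N home mv T out x = (\<lambda>j. j < 3 * d \<and> out j (restr x (held N home mv T j)))"

definition quantum_always_valid :: "nat \<Rightarrow> nat \<Rightarrow> bool" where
  "quantum_always_valid d T \<longleftrightarrow>
     (\<exists>N home mv U out. qlocal_valid d T N home mv U \<and>
        (\<forall>b0 b1 b2. \<forall>x. qrun d N home mv U (net_input d b0 b1 b2) T x \<noteq> 0 \<longrightarrow>
            qoutput d N home mv T out x \<in> Lambda d b0 b1 b2))"

text \<open>All randomness (shared, and private coins, which can be regarded as parts of
the shared random string) is a sample r of a probability space R. Node v starts in
state init v (input of v) r; in round t+1 each node v sends msg t v u s to each
neighbour u (s its current state) and updates its state with upd, given the
messages received from its neighbours (None from non-neighbours).\<close>

fun crun ::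
  "nat \<Rightarrow> (nat \<Rightarrow> bool \<Rightarrow> 'r \<Rightarrow> 's) \<Rightarrow> (nat \<Rightarrow> nat \<Rightarrow> nat \<Rightarrow> 's \<Rightarrow> 'm) \<Rightarrow>
   (nat \<Rightarrow> nat \<Rightarrow> 's \<Rightarrow> (nat \<Rightarrow> 'm option) \<Rightarrow> 's) \<Rightarrow> (nat \<Rightarrow> bool) \<Rightarrow> 'r \<Rightarrow> nat \<Rightarrow> nat \<Rightarrow> 's" where
  "crun d init msg upd inp r 0 v = init v (inp v) r"
| "crun d init msg upd inp r (Suc t) v =
     upd t v (crun d init msg upd inp r t v)
       (\<lambda>u. if net_adj d u v then Some (msg t u v (crun d init msg upd inp r t u)) else None)"

definition coutput ::
  "nat \<Rightarrow> nat \<Rightarrow> (nat \<Rightarrow> bool \<Rightarrow> 'r \<Rightarrow> 's) \<Rightarrow> (nat \<Rightarrow> nat \<Rightarrow> nat \<Rightarrow> 's \<Rightarrow> 'm) \<Rightarrow>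
   (nat \<Rightarrow> nat \<Rightarrow> 's \<Rightarrow> (nat \<Rightarrow> 'm option) \<Rightarrow> 's) \<Rightarrow> (nat \<Rightarrow> 's \<Rightarrow> bool) \<Rightarrow>
   (nat \<Rightarrow> bool) \<Rightarrow> 'r \<Rightarrow> bits" where
  "coutput d T init msg upd out inp r = (\<lambda>j. j < 3 * d \<and> out j (crun d init msg upd inp r T j))"

definition csuccess_event ::
  "nat \<Rightarrow> nat \<Rightarrow> 'r measure \<Rightarrow> (nat \<Rightarrow> bool \<Rightarrow> 'r \<Rightarrow> 's) \<Rightarrow> (nat \<Rightarrow> nat \<Rightarrow> nat \<Rightarrow> 's \<Rightarrow> 'm) \<Rightarrow>
   (nat \<Rightarrow> nat \<Rightarrow> 's \<Rightarrow> (nat \<Rightarrow> 'm option) \<Rightarrow> 's) \<Rightarrow> (nat \<Rightarrow> 's \<Rightarrow> bool) \<Rightarrow>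
   bool \<Rightarrow> bool \<Rightarrow> bool \<Rightarrow> 'r set" where
  "csuccess_event d T R init msg upd out b0 b1 b2 =
     {r \<in> space R. coutput d T init msg upd out (net_input d b0 b1 b2) r \<in> Lambda d b0 b1 b2}"

end

theory Submission
  imports Defs
begin

text \<open>
  Node v_j prepares a Bell pair on qubit j and a copy 3d + j and sends the copy to
  v_(j-1), while w_i sends its input bit, as a qubit, to v_(di). Holding the copy of its successor,
  v_j applies the CZ of the edge {v_j, v_(j+1)} and, if j = di, the S gate controlled by the input
  qubit. After the copies return, all qubits are measured in the Hadamard basis; the XOR of the two
  outcomes at v_j is then distributed exactly like the outcome of P_d(b0, b1, b2).

  Products of stabilizers of the graph state force parity constraints on Lambda_d:
  for every valid m, the number of sites of a certain pattern a with m_j = 1 is even for the even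
  sites on input 000 and the odd sites on input 111, and odd for the even sites together with the
  interior of one of the three arcs on inputs 110, 011, 101. Within d/2 rounds the output on each
  third of the cycle is independent of the input bits of the two distant nodes w_i, which forces the
  five counts of a single run to have even sum. Hence every random string fails on one of these five
  inputs, and one of them fails with probability at least 1/5.
\<close>

section \<open>Operators on qubit registers\<close>

definition phase_Z :: "bool \<Rightarrow> complex" where
  "phase_Z b = (if b then -1 else 1)"

definition phase_S :: "bool \<Rightarrow> complex" where
  "phase_S b = (if b then \<i> else 1)"

definition inv_sqrt2 :: complex where
  "inv_sqrt2 = 1 / complex_of_real (sqrt 2)"

definition agree_off :: "nat set \<Rightarrow> bits \<Rightarrow> bits set" where
  "agree_off S x = {y. \<forall>q. q \<notin> S \<longrightarrow> y q = x q}"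

lemma finite_conf: "finite S \<Longrightarrow> finite (conf S)"
proof -
  assume "finite S"
  moreover have "conf S \<subseteq> (\<lambda>A q. q \<in> A) ` Pow S"
  proof
    fix x assume "x \<in> conf S"
    then have "x = (\<lambda>q. q \<in> {q\<in>S. x q})" by (auto simp: conf_def)
    then show "x \<in> (\<lambda>A q. q \<in> A) ` Pow S" by blast
  qed
  ultimately show ?thesis by (meson finite_Pow_iff finite_imageI finite_subset)
qed

lemma restr_in_conf [simp]: "restr x S \<in> conf S"
  by (auto simp: restr_def conf_def)

lemma restr_apply_in: "q \<in> S \<Longrightarrow> restr x S q = x q"
  by (simp add: restr_def)

lemma restr_override_on: "z \<in> conf S \<Longrightarrow> restr (override_on x z S) S = z"
  by (auto simp: restr_def override_on_def conf_def)

lemma override_on_in_agree_off: "override_on x z S \<in> agree_off S x"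
  by (simp add: agree_off_def)

lemma override_on_restr: "y \<in> agree_off S x \<Longrightarrow> override_on x (restr y S) S = y"
  by (auto simp: restr_def override_on_def agree_off_def)

lemma override_on_conf: "x \<in> conf S \<Longrightarrow> z \<in> conf S \<Longrightarrow> override_on x z S = z"
  by (auto simp: override_on_def conf_def)

lemma self_in_agree_off [simp]: "x \<in> agree_off S x"
  by (simp add: agree_off_def)

lemma agree_off_cong: "y \<in> agree_off S x \<Longrightarrow> agree_off S y = agree_off S x"
  by (auto simp: agree_off_def)

lemma agree_off_eqI: "y \<in> agree_off S x \<Longrightarrow> restr y S = restr x S \<Longrightarrow> y = x"
  by (auto simp: agree_off_def restr_def fun_eq_iff)

lemma bij_betw_restr_agree_off: "bij_betw (\<lambda>y. restr y S) (agree_off S x) (conf S)"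
  by (rule bij_betw_byWitness[where f' = "\<lambda>z. override_on x z S"])
    (auto simp: restr_override_on override_on_in_agree_off override_on_restr)

lemma finite_agree_off: "finite S \<Longrightarrow> finite (agree_off S x)"
  using bij_betw_restr_agree_off finite_conf bij_betw_finite by blast

lemma sum_agree_off_restr: "(\<Sum>y\<in>agree_off S x. g (restr y S)) = (\<Sum>c\<in>conf S. g c)"
  using sum.reindex_bij_betw[OF bij_betw_restr_agree_off] .

lemma apply_on_eq_sum:
  "apply_on S u \<psi> x = (\<Sum>y\<in>agree_off S x. u (restr x S) (restr y S) * \<psi> y)"
  by (simp add: apply_on_def agree_off_def)

lemma agree_off_singleton: "agree_off {k} x = {x(k := False), x(k := True)}"
proof
  show "agree_off {k} x \<subseteq> {x(k := False), x(k := True)}"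
  proof
    fix y assume "y \<in> agree_off {k} x"
    then have "y = x(k := y k)" by (auto simp: agree_off_def fun_eq_iff)
    then show "y \<in> {x(k := False), x(k := True)}" by (cases "y k") auto
  qed
qed (auto simp: agree_off_def)

lemma sum_upd_False_True:
  "(\<Sum>c\<in>{a(k := False), a(k := True)}. g c) = g (a(k := False)) + g (a(k := True))"
proof -
  have "a(k := False) \<noteq> a(k := True)"
    by (metis fun_upd_same)
  then show ?thesis
    by (simp only: sum.insert finite.intros insert_iff singleton_iff empty_iff simp_thms sum.empty add_0_right)
qed

definition qop_comp :: "nat set \<Rightarrow> qop \<Rightarrow> qop \<Rightarrow> qop" where
  "qop_comp S u v = (\<lambda>a b. \<Sum>c\<in>conf S. u a c * v c b)"

definition diag_op :: "(bits \<Rightarrow> complex) \<Rightarrow> qop" where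
  "diag_op p = (\<lambda>a b. if a = b then p a else 0)"

definition perm_op :: "(bits \<Rightarrow> bits) \<Rightarrow> qop" where
  "perm_op f = (\<lambda>a b. if b = f a then 1 else 0)"

definition id_op :: qop where
  "id_op = diag_op (\<lambda>_. 1)"

definition hadamard_op :: "nat set \<Rightarrow> nat \<Rightarrow> qop" where
  "hadamard_op S k = (\<lambda>a b. if \<forall>q\<in>S - {k}. a q = b q then hgate k a b else 0)"

lemma apply_on_qop_comp:
  "apply_on S (qop_comp S u v) \<psi> = apply_on S u (apply_on S v \<psi>)"
proof
  fix x
  let ?r = "\<lambda>y. restr y S"
  have "apply_on S u (apply_on S v \<psi>) x =
      (\<Sum>y\<in>agree_off S x. \<Sum>z\<in>agree_off S x. u (?r x) (?r y) * v (?r y) (?r z) * \<psi> z)"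
    unfolding apply_on_eq_sum
    by (intro sum.cong refl) (simp add: agree_off_cong sum_distrib_left mult.assoc)
  also have "\<dots> = (\<Sum>z\<in>agree_off S x. (\<Sum>y\<in>agree_off S x. u (?r x) (?r y) * v (?r y) (?r z)) * \<psi> z)"
    by (subst sum.swap) (simp add: sum_distrib_right)
  also have "\<dots> = (\<Sum>z\<in>agree_off S x. qop_comp S u v (?r x) (?r z) * \<psi> z)"
    unfolding qop_comp_def by (subst sum_agree_off_restr) simp
  also have "\<dots> = apply_on S (qop_comp S u v) \<psi> x"
    by (simp add: apply_on_eq_sum)
  finally show "apply_on S (qop_comp S u v) \<psi> x = apply_on S u (apply_on S v \<psi>) x" ..
qed

lemma apply_on_diag_op:
  assumes "finite S"
  shows "apply_on S (diag_op p) \<psi> x = p (restr x S) * \<psi> x"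
proof -
  have "apply_on S (diag_op p) \<psi> x =
      (\<Sum>y\<in>agree_off S x. if y = x then p (restr x S) * \<psi> x else 0)"
    unfolding apply_on_eq_sum diag_op_def by (intro sum.cong refl) (auto dest: agree_off_eqI)
  then show ?thesis
    using finite_agree_off[OF assms] by simp
qed

lemma apply_on_id_op: "finite S \<Longrightarrow> apply_on S id_op \<psi> = \<psi>"
  by (simp add: id_op_def apply_on_diag_op fun_eq_iff)

lemma apply_on_perm_op:
  assumes "finite S" and "\<And>a. a \<in> conf S \<Longrightarrow> f a \<in> conf S"
  shows "apply_on S (perm_op f) \<psi> x = \<psi> (override_on x (f (restr x S)) S)"
proof -
  let ?y = "override_on x (f (restr x S)) S"
  have "apply_on S (perm_op f) \<psi> x = (\<Sum>y\<in>agree_off S x. if y = ?y then \<psi> y else 0)"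
    unfolding apply_on_eq_sum perm_op_def
  proof (intro sum.cong refl)
    fix y assume "y \<in> agree_off S x"
    then have "restr y S = f (restr x S) \<longleftrightarrow> y = ?y"
      using override_on_restr restr_override_on[OF assms(2)[OF restr_in_conf]] by metis
    then show "(if restr y S = f (restr x S) then 1 else 0) * \<psi> y = (if y = ?y then \<psi> y else 0)"
      by simp
  qed
  then show ?thesis
    using finite_agree_off[OF assms(1)] override_on_in_agree_off by simp
qed

lemma apply_on_hadamard_op:
  assumes "finite S" and "k \<in> S"
  shows "apply_on S (hadamard_op S k) \<psi> = apply_H k \<psi>"
proof
  fix x
  let ?u = "\<lambda>y. hadamard_op S k (restr x S) (restr y S) * \<psi> y"
  have "apply_on S (hadamard_op S k) \<psi> x = (\<Sum>y\<in>agree_off {k} x. ?u y)"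
    unfolding apply_on_eq_sum
  proof (rule sum.mono_neutral_right)
    show "finite (agree_off S x)" using assms(1) by (rule finite_agree_off)
    show "agree_off {k} x \<subseteq> agree_off S x" using assms(2) by (auto simp: agree_off_def)
    show "\<forall>y\<in>agree_off S x - agree_off {k} x. ?u y = 0"
      by (auto simp: agree_off_def hadamard_op_def restr_def)
  qed
  also have "\<dots> = apply_H k \<psi> x"
    unfolding apply_H_def apply_on_eq_sum
    by (intro sum.cong refl) (auto simp: hadamard_op_def hgate_def restr_def agree_off_def assms(2))
  finally show "apply_on S (hadamard_op S k) \<psi> x = apply_H k \<psi> x" .
qed

lemma unitary_on_diag_op:
  assumes "finite S" and "\<And>a. a \<in> conf S \<Longrightarrow> cnj (p a) * p a = 1"
  shows "unitary_on S (diag_op p)"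
  unfolding unitary_on_def
proof (intro conjI ballI)
  fix a b assume a: "a \<in> conf S" and "b \<in> conf S"
  have "(\<Sum>c\<in>conf S. cnj (diag_op p c a) * diag_op p c b) =
      (\<Sum>c\<in>conf S. if c = a then (if a = b then cnj (p a) * p a else 0) else 0)"
    by (intro sum.cong refl) (auto simp: diag_op_def)
  then show "(\<Sum>c\<in>conf S. cnj (diag_op p c a) * diag_op p c b) = (if a = b then 1 else 0)"
    using a assms(2)[OF a] finite_conf[OF assms(1)] by auto
qed (rule assms(1))

lemma unitary_on_id_op: "finite S \<Longrightarrow> unitary_on S id_op"
  unfolding id_op_def by (rule unitary_on_diag_op) auto

lemma unitary_on_perm_op:
  assumes "finite S" and "\<And>a. a \<in> conf S \<Longrightarrow> f a \<in> conf S"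
    and "\<And>a. a \<in> conf S \<Longrightarrow> f (f a) = a"
  shows "unitary_on S (perm_op f)"
  unfolding unitary_on_def
proof (intro conjI ballI)
  fix a b assume a: "a \<in> conf S" and b: "b \<in> conf S"
  have "(\<Sum>c\<in>conf S. cnj (perm_op f c a) * perm_op f c b) =
      (\<Sum>c\<in>conf S. if c = f a then (if b = f c then 1 else 0) else 0)"
  proof (intro sum.cong refl)
    fix c assume "c \<in> conf S"
    then have "a = f c \<longleftrightarrow> c = f a" using assms(3) a by metis
    then show "cnj (perm_op f c a) * perm_op f c b = (if c = f a then (if b = f c then 1 else 0) else 0)"
      by (auto simp: perm_op_def)
  qed
  then show "(\<Sum>c\<in>conf S. cnj (perm_op f c a) * perm_op f c b) = (if a = b then 1 else 0)"
    using a assms finite_conf[OF assms(1)] by auto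
qed (rule assms(1))

lemma hadamard_op_eq_0:
  assumes "a \<in> conf S" and "c \<in> conf S" and "c \<notin> {a(k := False), a(k := True)}"
  shows "hadamard_op S k c a = 0"
proof -
  have "\<exists>q\<in>S - {k}. c q \<noteq> a q"
  proof (rule ccontr)
    assume "\<not> ?thesis"
    then have "c = a(k := c k)"
      using assms(1,2) by (auto simp: conf_def fun_eq_iff)
    then show False
      using assms(3) by (cases "c k") auto
  qed
  then show ?thesis
    by (auto simp: hadamard_op_def)
qed

lemma cnj_hgate_mult: "cnj (hgate k c a) * hgate k c b = phase_Z (c k \<and> a k) * phase_Z (c k \<and> b k) / 2"
proof -
  have "complex_of_real (sqrt 2) * complex_of_real (sqrt 2) = 2"
    by (simp flip: of_real_mult)
  then show ?thesis by (simp add: hgate_def phase_Z_def)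
qed

lemma unitary_on_hadamard_op:
  assumes S: "finite S" and k: "k \<in> S"
  shows "unitary_on S (hadamard_op S k)"
  unfolding unitary_on_def
proof (intro conjI ballI)
  fix a b assume a: "a \<in> conf S" and b: "b \<in> conf S"
  let ?g = "\<lambda>c. cnj (hadamard_op S k c a) * hadamard_op S k c b"
  have "(\<Sum>c\<in>conf S. ?g c) = (\<Sum>c\<in>{a(k := False), a(k := True)}. ?g c)"
    using a k finite_conf[OF S] hadamard_op_eq_0[OF a]
    by (intro sum.mono_neutral_right) (auto simp: conf_def)
  also have "\<dots> = ?g (a(k := False)) + ?g (a(k := True))"
    by (simp only: sum_upd_False_True)
  also have "\<dots> = (if a = b then 1 else 0)"
  proof (cases "\<forall>q\<in>S - {k}. a q = b q")
    case True
    have ab: "a = b \<longleftrightarrow> a k = b k"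
    proof
      assume "a k = b k"
      then have "a q = b q" for q
        using True a b by (cases "q \<in> S") (auto simp: conf_def)
      then show "a = b" ..
    qed simp
    have g: "?g (a(k := x)) = phase_Z (x \<and> a k) * phase_Z (x \<and> b k) / 2" for x
    proof -
      have "\<forall>q\<in>S - {k}. (a(k := x)) q = a q" "\<forall>q\<in>S - {k}. (a(k := x)) q = b q"
        using True by auto
      then show ?thesis by (simp add: hadamard_op_def cnj_hgate_mult)
    qed
    show ?thesis
      unfolding g using ab by (simp add: phase_Z_def)
  next
    case False
    then have zero: "?g c = 0" for c
      by (auto simp: hadamard_op_def)
    have "a \<noteq> b"
      using False by auto
    then show ?thesis
      by (simp only: zero add_0_left if_False simp_thms)
  qed
  finally show "(\<Sum>c\<in>conf S. ?g c) = (if a = b then 1 else 0)" .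
qed (rule S)

lemma unitary_on_qop_comp:
  assumes S: "finite S" and "unitary_on S u" and "unitary_on S v"
  shows "unitary_on S (qop_comp S u v)"
  unfolding unitary_on_def
proof (intro conjI ballI)
  fix a b assume a: "a \<in> conf S" and b: "b \<in> conf S"
  have u: "(\<Sum>c\<in>conf S. cnj (u c e) * u c f) = (if e = f then 1 else 0)"
    if "e \<in> conf S" "f \<in> conf S" for e f
    using assms(2) that by (simp add: unitary_on_def)
  have "(\<Sum>c\<in>conf S. cnj (qop_comp S u v c a) * qop_comp S u v c b) =
      (\<Sum>c\<in>conf S. \<Sum>e\<in>conf S. \<Sum>f\<in>conf S. cnj (v e a) * v f b * (cnj (u c e) * u c f))"
  proof (rule sum.cong[OF refl])
    fix c
    have "cnj (qop_comp S u v c a) * qop_comp S u v c b =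
        (\<Sum>e\<in>conf S. cnj (u c e) * cnj (v e a)) * (\<Sum>f\<in>conf S. u c f * v f b)"
      by (simp add: qop_comp_def)
    then show "cnj (qop_comp S u v c a) * qop_comp S u v c b =
        (\<Sum>e\<in>conf S. \<Sum>f\<in>conf S. cnj (v e a) * v f b * (cnj (u c e) * u c f))"
      by (simp only: sum_product) (simp add: mult_ac)
  qed
  also have "\<dots> = (\<Sum>e\<in>conf S. \<Sum>c\<in>conf S. \<Sum>f\<in>conf S. cnj (v e a) * v f b * (cnj (u c e) * u c f))"
    by (rule sum.swap)
  also have "\<dots> = (\<Sum>e\<in>conf S. \<Sum>f\<in>conf S. cnj (v e a) * v f b * (\<Sum>c\<in>conf S. cnj (u c e) * u c f))"
    by (simp only: sum_distrib_left) (intro sum.cong refl sum.swap)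
  also have "\<dots> = (\<Sum>e\<in>conf S. \<Sum>f\<in>conf S. if f = e then cnj (v e a) * v e b else 0)"
    by (intro sum.cong refl) (simp add: u)
  also have "\<dots> = (\<Sum>e\<in>conf S. cnj (v e a) * v e b)"
    using finite_conf[OF S] by simp
  also have "\<dots> = (if a = b then 1 else 0)"
    using assms(3) a b by (simp add: unitary_on_def)
  finally show "(\<Sum>c\<in>conf S. cnj (qop_comp S u v c a) * qop_comp S u v c b) = (if a = b then 1 else 0)" .
qed (rule S)

lemma inv_sqrt2_nonzero: "inv_sqrt2 \<noteq> 0"
  by (simp add: inv_sqrt2_def)

lemma prod_phase_Z: "finite A \<Longrightarrow> (\<Prod>q\<in>A. phase_Z (P q)) = (-1) ^ card {q\<in>A. P q}"
proof (induction A rule: finite_induct)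
  case (insert x F)
  have "{q \<in> insert x F. P q} = (if P x then insert x {q\<in>F. P q} else {q\<in>F. P q})" by auto
  then show ?case using insert by (auto simp: phase_Z_def)
qed simp

section \<open>Hadamard transforms and the amplitudes of P_d\<close>

lemma apply_H_eq:
  "apply_H k \<psi> x = inv_sqrt2 * (\<psi> (x(k := False)) + phase_Z (x k) * \<psi> (x(k := True)))"
  unfolding apply_H_def apply_on_eq_sum agree_off_singleton sum_upd_False_True
  by (simp add: hgate_def restr_def inv_sqrt2_def phase_Z_def field_simps)

lemma apply_CZ_eq: "apply_CZ j k \<psi> x = phase_Z (x j \<and> x k) * \<psi> x"
proof -
  have "czgate j k = diag_op (\<lambda>a. phase_Z (a j \<and> a k))"
    by (auto simp: czgate_def diag_op_def phase_Z_def fun_eq_iff)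
  then show ?thesis
    by (simp add: apply_CZ_def apply_on_diag_op restr_def)
qed

lemma apply_S_eq: "apply_S k \<psi> x = phase_S (x k) * \<psi> x"
proof -
  have "sgate k = diag_op (\<lambda>a. phase_S (a k))"
    by (auto simp: sgate_def diag_op_def phase_S_def fun_eq_iff)
  then show ?thesis
    by (simp add: apply_S_def apply_on_diag_op restr_def)
qed

lemma fold_apply_CZ:
  "fold (\<lambda>(j, k). apply_CZ j k) E \<psi> x = (\<Prod>(j, k)\<leftarrow>E. phase_Z (x j \<and> x k)) * \<psi> x"
  by (induction E arbitrary: \<psi>) (auto simp: apply_CZ_eq)

definition hadamard_transform :: "nat set \<Rightarrow> qstate \<Rightarrow> qstate" where
  "hadamard_transform Q \<psi> x =
     inv_sqrt2 ^ card Q * (\<Sum>z\<in>conf Q. (\<Prod>q\<in>Q. phase_Z (x q \<and> z q)) * \<psi> (override_on x z Q))"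

lemma conf_empty: "conf {} = {\<lambda>_. False}"
  by (auto simp: conf_def)

lemma hadamard_transform_empty [simp]: "hadamard_transform {} \<psi> = \<psi>"
  by (simp add: hadamard_transform_def conf_empty fun_eq_iff)

lemma sum_conf_insert:
  assumes "k \<notin> Q" and "finite Q"
  shows "(\<Sum>z\<in>conf (insert k Q). f z) = (\<Sum>z\<in>conf Q. f z + f (z(k := True)))"
proof -
  have conf: "conf (insert k Q) = conf Q \<union> (\<lambda>z. z(k := True)) ` conf Q"
  proof (intro equalityI subsetI)
    fix z assume z: "z \<in> conf (insert k Q)"
    show "z \<in> conf Q \<union> (\<lambda>z. z(k := True)) ` conf Q"
    proof (cases "z k")
      case True
      then have "z = (z(k := False))(k := True)" by (auto simp: fun_eq_iff)
      moreover have "z(k := False) \<in> conf Q" using z by (auto simp: conf_def)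
      ultimately show ?thesis by blast
    qed (use z in \<open>auto simp: conf_def\<close>)
  qed (auto simp: conf_def)
  have "(\<Sum>z\<in>conf (insert k Q). f z) = (\<Sum>z\<in>conf Q. f z) + (\<Sum>z\<in>(\<lambda>z. z(k := True)) ` conf Q. f z)"
    unfolding conf using assms finite_conf[OF assms(2)]
    by (intro sum.union_disjoint) (auto simp: conf_def)
  also have "(\<Sum>z\<in>(\<lambda>z. z(k := True)) ` conf Q. f z) = (\<Sum>z\<in>conf Q. f (z(k := True)))"
    using assms(1) by (intro sum.reindex_cong[of "\<lambda>z. z(k := True)"]) (auto simp: inj_on_def conf_def fun_eq_iff)
  finally show ?thesis by (simp add: sum.distrib)
qed

lemma apply_H_hadamard_transform:
  assumes k: "k \<notin> Q" and Q: "finite Q"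
  shows "apply_H k (hadamard_transform Q \<psi>) = hadamard_transform (insert k Q) \<psi>"
proof
  fix x
  let ?s = "\<lambda>z. \<Prod>q\<in>Q. phase_Z (x q \<and> z q)"
  let ?t = "\<lambda>b z. ?s z * \<psi> (override_on x (z(k := b)) (insert k Q))"
  have shifted: "hadamard_transform Q \<psi> (x(k := b)) = inv_sqrt2 ^ card Q * (\<Sum>z\<in>conf Q. ?t b z)" for b
  proof -
    have "?s z = (\<Prod>q\<in>Q. phase_Z ((x(k := b)) q \<and> z q))" for z
      using k by (intro prod.cong) auto
    moreover have "override_on (x(k := b)) z Q = override_on x (z(k := b)) (insert k Q)"
      if "z \<in> conf Q" for z
      using k that by (auto simp: override_on_def conf_def)
    ultimately show ?thesis
      by (simp add: hadamard_transform_def cong: sum.cong)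
  qed
  have split: "(\<Prod>q\<in>insert k Q. phase_Z (x q \<and> (z(k := b)) q)) = phase_Z (x k \<and> b) * ?s z" for z b
  proof -
    have "(\<Prod>q\<in>Q. phase_Z (x q \<and> (z(k := b)) q)) = ?s z"
      using k by (intro prod.cong) auto
    then show ?thesis using k Q by simp
  qed
  have unchanged: "z \<in> conf Q \<Longrightarrow> z(k := False) = z" for z
    using k by (auto simp: conf_def fun_eq_iff)
  have "hadamard_transform (insert k Q) \<psi> x = inv_sqrt2 ^ card (insert k Q) * (\<Sum>z\<in>conf Q.
      (\<Prod>q\<in>insert k Q. phase_Z (x q \<and> (z(k := False)) q)) * \<psi> (override_on x (z(k := False)) (insert k Q)) +
      (\<Prod>q\<in>insert k Q. phase_Z (x q \<and> (z(k := True)) q)) * \<psi> (override_on x (z(k := True)) (insert k Q)))"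
    unfolding hadamard_transform_def sum_conf_insert[OF k Q]
    by (intro arg_cong2[where f = "(*)"] refl sum.cong) (simp_all add: unchanged)
  also have "\<dots> = inv_sqrt2 * inv_sqrt2 ^ card Q * (\<Sum>z\<in>conf Q. ?t False z + phase_Z (x k) * ?t True z)"
    unfolding split using k Q by (simp add: phase_Z_def)
  also have "\<dots> = apply_H k (hadamard_transform Q \<psi>) x"
    unfolding apply_H_eq shifted by (simp add: sum.distrib sum_distrib_left algebra_simps)
  finally show "apply_H k (hadamard_transform Q \<psi>) x = hadamard_transform (insert k Q) \<psi> x" ..
qed

lemma fold_apply_H_hadamard_transform:
  "distinct L \<Longrightarrow> set L \<inter> Q = {} \<Longrightarrow> finite Q \<Longrightarrow>
    fold apply_H L (hadamard_transform Q \<psi>) = hadamard_transform (Q \<union> set L) \<psi>"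
  by (induction L arbitrary: Q) (simp_all add: apply_H_hadamard_transform)

lemma fold_apply_H: "distinct L \<Longrightarrow> fold apply_H L \<psi> = hadamard_transform (set L) \<psi>"
  using fold_apply_H_hadamard_transform[of L "{}" \<psi>] by simp

lemma hadamard_transform_ket0:
  assumes "finite Q"
  shows "hadamard_transform Q ket0 x = inv_sqrt2 ^ card Q * (if x \<in> conf Q then 1 else 0)"
proof -
  have "(\<Prod>q\<in>Q. phase_Z (x q \<and> z q)) * ket0 (override_on x z Q) =
      (if z = (\<lambda>_. False) then (if x \<in> conf Q then 1 else 0) else 0)" if "z \<in> conf Q" for z
  proof (cases "z = (\<lambda>_. False)")
    case False
    then obtain q where "z q" by auto
    then show ?thesis using that by (auto simp: ket0_def override_on_def conf_def)
  qed (auto simp: ket0_def override_on_def conf_def phase_Z_def)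
  then have "(\<Sum>z\<in>conf Q. (\<Prod>q\<in>Q. phase_Z (x q \<and> z q)) * ket0 (override_on x z Q)) =
      (if x \<in> conf Q then 1 else 0)"
    using finite_conf[OF assms] by (simp cong: sum.cong) (simp add: conf_def)
  then show ?thesis by (simp add: hadamard_transform_def)
qed

abbreviation cyc_next :: "nat \<Rightarrow> nat \<Rightarrow> nat" where
  "cyc_next n j \<equiv> Suc j mod n"

definition cyc_prev :: "nat \<Rightarrow> nat \<Rightarrow> nat" where
  "cyc_prev n j = (if j = 0 then n - 1 else j - 1)"

lemma cyc_next_eq: "j < n \<Longrightarrow> cyc_next n j = (if Suc j = n then 0 else Suc j)"
  by auto

lemma cyc_prev_next: "j < n \<Longrightarrow> cyc_prev n (cyc_next n j) = j"
  by (auto simp: cyc_prev_def cyc_next_eq)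

lemma prod_cyc_next: "0 < n \<Longrightarrow> (\<Prod>j<n. f (cyc_next n j)) = (\<Prod>j<n. f j)"
  by (rule prod.reindex_bij_witness[where i = "cyc_prev n" and j = "cyc_next n"])
    (auto simp: cyc_prev_def cyc_next_eq)

text \<open>Up to the factor inv_sqrt2 ^ (3*d), the amplitude of z after steps (1) and (2) of P_d.\<close>
definition graph_amp :: "nat \<Rightarrow> bool \<Rightarrow> bool \<Rightarrow> bool \<Rightarrow> bits \<Rightarrow> complex" where
  "graph_amp d b0 b1 b2 z = (\<Prod>j<3*d. phase_Z (z j \<and> z (cyc_next (3*d) j))) *
     phase_S (b0 \<and> z 0) * phase_S (b1 \<and> z d) * phase_S (b2 \<and> z (2*d))"

definition fourier_term :: "nat \<Rightarrow> bool \<Rightarrow> bool \<Rightarrow> bool \<Rightarrow> bits \<Rightarrow> bits \<Rightarrow> complex" where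
  "fourier_term d b0 b1 b2 m z = (\<Prod>q<3*d. phase_Z (m q \<and> z q)) * graph_amp d b0 b1 b2 z"

lemma graph_amp_cong:
  assumes "0 < d" and "\<And>j. j < 3*d \<Longrightarrow> y j = z j"
  shows "graph_amp d b0 b1 b2 y = graph_amp d b0 b1 b2 z"
proof -
  have "(\<Prod>j<3*d. phase_Z (y j \<and> y (cyc_next (3*d) j))) = (\<Prod>j<3*d. phase_Z (z j \<and> z (cyc_next (3*d) j)))"
    using assms by (intro prod.cong) auto
  moreover have "y 0 = z 0" "y d = z d" "y (2*d) = z (2*d)"
    using assms by auto
  ultimately show ?thesis by (simp add: graph_amp_def)
qed

lemma process_state_eq:
  assumes m: "m \<in> conf {..<3*d}"
  shows "process_state d b0 b1 b2 m =
    inv_sqrt2 ^ (6*d) * (\<Sum>z\<in>conf {..<3*d}. fourier_term d b0 b1 b2 m z)"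
proof -
  let ?\<psi> = "fold (\<lambda>i. if [b0, b1, b2] ! i then apply_S (d * i) else id) [0..<3] (graph_state d)"
  have "fold apply_H [0..<3*d] ket0 = hadamard_transform {..<3*d} ket0"
    by (simp add: fold_apply_H atLeast0LessThan)
  then have "graph_state d z = inv_sqrt2 ^ (3*d) * (if z \<in> conf {..<3*d} then 1 else 0) *
      (\<Prod>j<3*d. phase_Z (z j \<and> z (cyc_next (3*d) j)))" for z
    unfolding graph_state_def fold_apply_CZ cycle_edges_def
    by (simp add: hadamard_transform_ket0 prod.distinct_set_conv_list[symmetric] comp_def atLeast0LessThan)
  then have \<psi>: "?\<psi> z = inv_sqrt2 ^ (3*d) * graph_amp d b0 b1 b2 z" if "z \<in> conf {..<3*d}" for z
    using that by (simp add: upt_rec apply_S_eq graph_amp_def phase_S_def mult_2)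
  have "process_state d b0 b1 b2 m = hadamard_transform {..<3*d} ?\<psi> m"
    unfolding process_state_def Let_def by (simp add: fold_apply_H atLeast0LessThan)
  also have "\<dots> = inv_sqrt2 ^ (3*d) * (\<Sum>z\<in>conf {..<3*d}. inv_sqrt2 ^ (3*d) * fourier_term d b0 b1 b2 m z)"
    unfolding hadamard_transform_def
    by (simp add: override_on_conf[OF m] \<psi> fourier_term_def mult.left_commute cong: sum.cong)
  also have "\<dots> = inv_sqrt2 ^ (6*d) * (\<Sum>z\<in>conf {..<3*d}. fourier_term d b0 b1 b2 m z)"
  proof -
    have "inv_sqrt2 ^ (6*d) = inv_sqrt2 ^ (3*d) * inv_sqrt2 ^ (3*d)"
      by (simp flip: power_add)
    then show ?thesis by (simp add: sum_distrib_left mult.assoc)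
  qed
  finally show ?thesis .
qed

lemma mem_Lambda_iff:
  "m \<in> Lambda d b0 b1 b2 \<longleftrightarrow>
    m \<in> conf {..<3*d} \<and> (\<Sum>z\<in>conf {..<3*d}. fourier_term d b0 b1 b2 m z) \<noteq> 0"
  by (auto simp: Lambda_def process_state_eq inv_sqrt2_nonzero)

section \<open>Stabilizer patterns and parity constraints on Lambda_d\<close>

definition xor_bits :: "bits \<Rightarrow> bits \<Rightarrow> bits" where
  "xor_bits z a = (\<lambda>q. z q \<noteq> a q)"

text \<open>The graph state is stabilised by X_j Z_(j-1) Z_(j+1). For a stabilizer pattern a the Z-parts
  of the product of these stabilizers over j \<in> a cancel, the Z_(di) left over at an S-twisted
  site being supplied by S X S* = i X Z. The product is then a multiple of X^a, so after the final
  Hadamards the outcome has a fixed parity on a.\<close>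
definition stabilizer_pattern :: "nat \<Rightarrow> bool \<Rightarrow> bool \<Rightarrow> bool \<Rightarrow> bits \<Rightarrow> bool" where
  "stabilizer_pattern d b0 b1 b2 a \<longleftrightarrow>
     (\<forall>j<3*d. (a (cyc_prev (3*d) j) \<noteq> a (cyc_next (3*d) j)) \<longleftrightarrow>
        ((j = 0 \<and> b0) \<or> (j = d \<and> b1) \<or> (j = 2*d \<and> b2)) \<and> a j)"

lemma xor_bits_xor_bits [simp]: "xor_bits (xor_bits z a) a = z"
  by (auto simp: xor_bits_def)

lemma xor_bits_in_conf: "z \<in> conf S \<Longrightarrow> a \<in> conf S \<Longrightarrow> xor_bits z a \<in> conf S"
  by (auto simp: xor_bits_def conf_def)

lemma phase_Z_and_xor_bits: "phase_Z (p \<and> xor_bits z a q) = phase_Z (p \<and> z q) * phase_Z (p \<and> a q)"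
  by (auto simp: xor_bits_def phase_Z_def)

lemma phase_Z_xor_bits_xor_bits:
  "phase_Z (xor_bits z a i \<and> xor_bits z a j) =
    phase_Z (z i \<and> z j) * phase_Z (a i \<and> a j) * (phase_Z (z i \<and> a j) * phase_Z (a i \<and> z j))"
  by (auto simp: xor_bits_def phase_Z_def)

lemma prod_cycle_xor:
  assumes "0 < n"
  shows "(\<Prod>j<n. phase_Z (xor_bits z a j \<and> xor_bits z a (cyc_next n j))) =
    (\<Prod>j<n. phase_Z (z j \<and> z (cyc_next n j))) * (\<Prod>j<n. phase_Z (a j \<and> a (cyc_next n j))) *
    (\<Prod>j<n. phase_Z (z j \<and> (a (cyc_prev n j) \<noteq> a (cyc_next n j))))"
proof -
  have "(\<Prod>j<n. phase_Z (a j \<and> z (cyc_next n j))) =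
      (\<Prod>j<n. (\<lambda>k. phase_Z (z k \<and> a (cyc_prev n k))) (cyc_next n j))"
    by (intro prod.cong refl) (simp add: cyc_prev_next conj_commute)
  also have "\<dots> = (\<Prod>j<n. phase_Z (z j \<and> a (cyc_prev n j)))"
    by (rule prod_cyc_next[OF assms])
  finally have shift: "(\<Prod>j<n. phase_Z (a j \<and> z (cyc_next n j))) = \<dots>" .
  have "(\<Prod>j<n. phase_Z (xor_bits z a j \<and> xor_bits z a (cyc_next n j))) =
      (\<Prod>j<n. phase_Z (z j \<and> z (cyc_next n j))) * (\<Prod>j<n. phase_Z (a j \<and> a (cyc_next n j))) *
      ((\<Prod>j<n. phase_Z (z j \<and> a (cyc_next n j))) * (\<Prod>j<n. phase_Z (a j \<and> z (cyc_next n j))))"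
    by (simp only: phase_Z_xor_bits_xor_bits prod.distrib)
  also have "(\<Prod>j<n. phase_Z (z j \<and> a (cyc_next n j))) * (\<Prod>j<n. phase_Z (a j \<and> z (cyc_next n j))) =
      (\<Prod>j<n. phase_Z (z j \<and> (a (cyc_prev n j) \<noteq> a (cyc_next n j))))"
    unfolding shift prod.distrib[symmetric] by (intro prod.cong refl) (auto simp: phase_Z_def)
  finally show ?thesis .
qed

lemma phase_S_xor: "phase_S (b \<and> (z \<noteq> a)) * phase_Z (z \<and> b \<and> a) = phase_S (b \<and> z) * phase_S (b \<and> a)"
  by (auto simp: phase_S_def phase_Z_def)

lemma graph_amp_xor:
  assumes d: "0 < d" and a: "stabilizer_pattern d b0 b1 b2 a"
  shows "graph_amp d b0 b1 b2 (xor_bits z a) = graph_amp d b0 b1 b2 z * graph_amp d b0 b1 b2 a"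
proof -
  let ?Y = "\<lambda>j. (j = 0 \<and> b0) \<or> (j = d \<and> b1) \<or> (j = 2*d \<and> b2)"
  have "(\<Prod>j<3*d. phase_Z (z j \<and> (a (cyc_prev (3*d) j) \<noteq> a (cyc_next (3*d) j)))) =
      (\<Prod>j<3*d. phase_Z (z j \<and> ?Y j \<and> a j))"
    using a by (intro prod.cong) (auto simp: stabilizer_pattern_def)
  also have "\<dots> = (\<Prod>j\<in>{0, d, 2*d}. phase_Z (z j \<and> ?Y j \<and> a j))"
    using d by (intro prod.mono_neutral_right) (auto simp: phase_Z_def)
  also have "\<dots> = phase_Z (z 0 \<and> b0 \<and> a 0) * phase_Z (z d \<and> b1 \<and> a d) * phase_Z (z (2*d) \<and> b2 \<and> a (2*d))"
    using d by (simp add: mult_ac)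
  finally have cross: "(\<Prod>j<3*d. phase_Z (z j \<and> (a (cyc_prev (3*d) j) \<noteq> a (cyc_next (3*d) j)))) = \<dots>" .
  have "graph_amp d b0 b1 b2 (xor_bits z a) =
      (\<Prod>j<3*d. phase_Z (z j \<and> z (cyc_next (3*d) j))) * (\<Prod>j<3*d. phase_Z (a j \<and> a (cyc_next (3*d) j))) *
      (phase_S (b0 \<and> (z 0 \<noteq> a 0)) * phase_Z (z 0 \<and> b0 \<and> a 0)) *
      (phase_S (b1 \<and> (z d \<noteq> a d)) * phase_Z (z d \<and> b1 \<and> a d)) *
      (phase_S (b2 \<and> (z (2*d) \<noteq> a (2*d))) * phase_Z (z (2*d) \<and> b2 \<and> a (2*d)))"
    unfolding graph_amp_def prod_cycle_xor[OF mult_pos_pos[OF zero_less_numeral d]] cross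
    by (simp add: xor_bits_def mult_ac)
  then show ?thesis
    unfolding phase_S_xor by (simp add: graph_amp_def mult_ac)
qed

lemma fourier_term_xor:
  assumes "0 < d" and "stabilizer_pattern d b0 b1 b2 a"
  shows "fourier_term d b0 b1 b2 m (xor_bits z a) = fourier_term d b0 b1 b2 m a * fourier_term d b0 b1 b2 m z"
  unfolding fourier_term_def graph_amp_xor[OF assms] phase_Z_and_xor_bits prod.distrib
  by (simp add: mult_ac)

text \<open>Translating the summation variable by a stabilizer pattern multiplies the whole sum by
  fourier_term m a, so the sum can only be nonzero if this factor is 1.\<close>
lemma fourier_term_stabilizer_pattern:
  assumes d: "0 < d" and a: "stabilizer_pattern d b0 b1 b2 a" "a \<in> conf {..<3*d}"
    and m: "m \<in> Lambda d b0 b1 b2"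
  shows "fourier_term d b0 b1 b2 m a = 1"
proof (rule ccontr)
  assume ne: "fourier_term d b0 b1 b2 m a \<noteq> 1"
  let ?S = "\<Sum>z\<in>conf {..<3*d}. fourier_term d b0 b1 b2 m z"
  have "?S = (\<Sum>z\<in>conf {..<3*d}. fourier_term d b0 b1 b2 m (xor_bits z a))"
    by (rule sum.reindex_bij_witness[where i = "\<lambda>z. xor_bits z a" and j = "\<lambda>z. xor_bits z a"])
      (use a in \<open>auto simp: xor_bits_in_conf\<close>)
  also have "\<dots> = fourier_term d b0 b1 b2 m a * ?S"
    by (simp add: fourier_term_xor[OF d a(1)] sum_distrib_left)
  finally have "?S = 0"
    using ne by (metis mult_cancel_right1 mult.commute)
  then show False
    using m by (simp add: mem_Lambda_iff)
qed

definition overlap :: "nat \<Rightarrow> bits \<Rightarrow> bits \<Rightarrow> nat" where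
  "overlap n m a = card {q\<in>{..<n}. m q \<and> a q}"

lemma Lambda_parity:
  assumes "0 < d" and "stabilizer_pattern d b0 b1 b2 a" "a \<in> conf {..<3*d}"
    and "m \<in> Lambda d b0 b1 b2"
  shows "(-1) ^ overlap (3*d) m a * (-1) ^ card {j\<in>{..<3*d}. a j \<and> a (cyc_next (3*d) j)} *
    (phase_S (b0 \<and> a 0) * phase_S (b1 \<and> a d) * phase_S (b2 \<and> a (2*d))) = 1"
  using fourier_term_stabilizer_pattern[OF assms]
  by (simp add: fourier_term_def graph_amp_def prod_phase_Z overlap_def mult.assoc)

definition even_sites :: "nat \<Rightarrow> bits" where
  "even_sites d j \<longleftrightarrow> j < 3*d \<and> even j"

definition odd_sites :: "nat \<Rightarrow> bits" where
  "odd_sites d j \<longleftrightarrow> j < 3*d \<and> odd j"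

definition arc_sites :: "nat \<Rightarrow> nat \<Rightarrow> bits" where
  "arc_sites d i j \<longleftrightarrow> j < 3*d \<and> (even j \<or> d*i < j \<and> j < d*(i+1))"

lemma stabilizer_patternI:
  assumes "0 < d"
    and "\<And>j. j < 3*d \<Longrightarrow>
      (a (if j = 0 then 3*d - 1 else j - 1) \<noteq> a (if Suc j = 3*d then 0 else Suc j)) \<longleftrightarrow>
      ((j = 0 \<and> b0) \<or> (j = d \<and> b1) \<or> (j = 2*d \<and> b2)) \<and> a j"
  shows "stabilizer_pattern d b0 b1 b2 a"
  using assms by (simp add: stabilizer_pattern_def cyc_prev_def cyc_next_eq)

lemma stabilizer_pattern_even_sites:
  assumes "even d" and "0 < d"
  shows "stabilizer_pattern d False False False (even_sites d)"
  using assms(2) by (rule stabilizer_patternI) (use assms in \<open>auto simp: even_sites_def\<close>)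

lemma stabilizer_pattern_odd_sites:
  assumes "even d" and "0 < d"
  shows "stabilizer_pattern d True True True (odd_sites d)"
  using assms(2) by (rule stabilizer_patternI) (use assms in \<open>auto simp: odd_sites_def\<close>)

lemma even_Suc_neq_mult:
  assumes "even j" and "even d"
  shows "Suc j \<noteq> k * d" and "j \<noteq> Suc (k * d)"
  using assms by (metis dvd_mult even_Suc)+

lemma stabilizer_pattern_arc_sites:
  assumes "even d" and "0 < d" and "i < 3"
  shows "stabilizer_pattern d (i \<noteq> 1) (i \<noteq> 2) (i \<noteq> 0) (arc_sites d i)"
proof (rule stabilizer_patternI[OF assms(2)])
  fix j assume j: "j < 3*d"
  have i: "i = 0 \<or> i = 1 \<or> i = 2"
    using assms(3) by auto
  have last: "odd (3*d - 1)"
    using assms(1,2) by (simp add: even_diff_nat)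
  show "(arc_sites d i (if j = 0 then 3*d - 1 else j - 1) \<noteq>
      arc_sites d i (if Suc j = 3*d then 0 else Suc j)) \<longleftrightarrow>
      ((j = 0 \<and> i \<noteq> 1) \<or> (j = d \<and> i \<noteq> 2) \<or> (j = 2*d \<and> i \<noteq> 0)) \<and> arc_sites d i j"
  proof (cases "even j")
    case True
    have "j \<noteq> 1" "j \<noteq> Suc d" "j \<noteq> Suc (2*d)" "Suc j \<noteq> d" "Suc j \<noteq> 2*d" "Suc j \<noteq> 3*d"
      using even_Suc_neq_mult[OF True assms(1), of 0] even_Suc_neq_mult[OF True assms(1), of 1]
        even_Suc_neq_mult[OF True assms(1), of 2] even_Suc_neq_mult[OF True assms(1), of 3]
      by simp_all
    then show ?thesis
      using True i j assms(2) last unfolding arc_sites_def by (elim disjE) (auto simp: even_diff_nat)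
  next
    case False
    then have "j \<noteq> 0" "j \<noteq> d" "j \<noteq> 2*d"
      using assms(1) by (auto intro: odd_pos)
    then show ?thesis
      using False i j assms(2) unfolding arc_sites_def by (elim disjE) (auto simp: even_diff_nat)
  qed
qed

lemma arc_sites_edges:
  assumes "even d" and "0 < d" and "i < 3"
  shows "{j\<in>{..<3*d}. arc_sites d i j \<and> arc_sites d i (cyc_next (3*d) j)} = {d*i..<d*(i+1)}"
proof -
  have i: "i = 0 \<or> i = 1 \<or> i = 2"
    using assms(3) by auto
  have edge: "arc_sites d i j \<and> arc_sites d i (cyc_next (3*d) j) \<longleftrightarrow> d*i \<le> j \<and> j < d*(i+1)"
    if j: "j < 3*d" for j
  proof (cases "even j")
    case True
    have "Suc j \<noteq> d" "Suc j \<noteq> 2*d" "Suc j \<noteq> 3*d"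
      using even_Suc_neq_mult(1)[OF True assms(1), of 1] even_Suc_neq_mult(1)[OF True assms(1), of 2]
        even_Suc_neq_mult(1)[OF True assms(1), of 3]
      by simp_all
    then show ?thesis
      using True i j unfolding arc_sites_def cyc_next_eq[OF j] by (elim disjE) auto
  next
    case False
    then have "j \<noteq> 0" "j \<noteq> d" "j \<noteq> 2*d"
      using assms(1) by (auto intro: odd_pos)
    then show ?thesis
      using False i j unfolding arc_sites_def cyc_next_eq[OF j] by (elim disjE) auto
  qed
  have bound: "d*(i+1) \<le> 3*d"
    using assms(3) by simp
  show ?thesis
  proof (intro set_eqI)
    fix j
    show "j \<in> {j\<in>{..<3*d}. arc_sites d i j \<and> arc_sites d i (cyc_next (3*d) j)} \<longleftrightarrow> j \<in> {d*i..<d*(i+1)}"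
    proof (cases "j < 3*d")
      case False
      then have "\<not> j < d*(i+1)"
        using bound by linarith
      with False show ?thesis by simp
    qed (simp add: edge)
  qed
qed

lemma overlap_even_sites:
  assumes "even d" and "0 < d" and "m \<in> Lambda d False False False"
  shows "even (overlap (3*d) m (even_sites d))"
proof -
  have E: "{j\<in>{..<3*d}. even_sites d j \<and> even_sites d (cyc_next (3*d) j)} = {}"
    using assms(1) even_Suc_neq_mult(1)[of _ d 3]
    by (auto simp: even_sites_def cyc_next_eq split: if_split_asm)
  have "even_sites d \<in> conf {..<3*d}"
    by (simp add: even_sites_def conf_def)
  then have "(-1::complex) ^ overlap (3*d) m (even_sites d) = 1"
    using Lambda_parity[OF assms(2) stabilizer_pattern_even_sites[OF assms(1,2)] _ assms(3)]
    unfolding E by (simp add: phase_S_def)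
  then show ?thesis
    by (simp add: minus_one_power_iff split: if_split_asm)
qed

lemma overlap_odd_sites:
  assumes "even d" and "0 < d" and "m \<in> Lambda d True True True"
  shows "even (overlap (3*d) m (odd_sites d))"
proof -
  have E: "{j\<in>{..<3*d}. odd_sites d j \<and> odd_sites d (cyc_next (3*d) j)} = {}"
    using assms(1) by (auto simp: odd_sites_def cyc_next_eq split: if_split_asm)
  have S: "phase_S (True \<and> odd_sites d 0) * phase_S (True \<and> odd_sites d d) *
      phase_S (True \<and> odd_sites d (2*d)) = 1"
    using assms(1) by (simp add: odd_sites_def phase_S_def)
  have "odd_sites d \<in> conf {..<3*d}"
    by (simp add: odd_sites_def conf_def)
  then have "(-1::complex) ^ overlap (3*d) m (odd_sites d) = 1"
    using Lambda_parity[OF assms(2) stabilizer_pattern_odd_sites[OF assms(1,2)] _ assms(3)]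
    unfolding E S by simp
  then show ?thesis
    by (simp add: minus_one_power_iff split: if_split_asm)
qed

lemma overlap_arc_sites:
  assumes "even d" and "0 < d" and "i < 3" and "m \<in> Lambda d (i \<noteq> 1) (i \<noteq> 2) (i \<noteq> 0)"
  shows "odd (overlap (3*d) m (arc_sites d i))"
proof -
  have S: "phase_S ((i \<noteq> 1) \<and> arc_sites d i 0) * phase_S ((i \<noteq> 2) \<and> arc_sites d i d) *
      phase_S ((i \<noteq> 0) \<and> arc_sites d i (2*d)) = -1"
    using assms(1-3) by (auto simp: arc_sites_def phase_S_def less_Suc_eq numeral_3_eq_3)
  have "arc_sites d i \<in> conf {..<3*d}"
    by (simp add: arc_sites_def conf_def)
  then have "(-1::complex) ^ overlap (3*d) m (arc_sites d i) * (-1) = 1"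
    using Lambda_parity[OF assms(2) stabilizer_pattern_arc_sites[OF assms(1-3)] _ assms(4)] assms(1)
    unfolding arc_sites_edges[OF assms(1-3)] S by simp
  then show ?thesis
    by (simp add: minus_one_power_iff split: if_split_asm)
qed

section \<open>Locality of classical algorithms\<close>

lemma crun_eq_if_far:
  fixes D :: "nat \<Rightarrow> int"
  assumes adj: "\<And>u v. net_adj d u v \<Longrightarrow> D v \<le> D u + 1"
    and inp: "\<And>v. inp v \<noteq> inp' v \<Longrightarrow> D v \<le> 0"
  shows "int t < D v \<Longrightarrow> crun d init msg upd inp r t v = crun d init msg upd inp' r t v"
proof (induction t arbitrary: v)
  case 0
  then have "inp v = inp' v"
    using inp by fastforce
  then show ?case by simp
next
  case (Suc t)
  have "crun d init msg upd inp r t u = crun d init msg upd inp' r t u" if "net_adj d u v" for u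
    using Suc adj[OF that] by simp
  moreover have "crun d init msg upd inp r t v = crun d init msg upd inp' r t v"
    using Suc by simp
  ultimately show ?case
    by (simp cong: if_cong)
qed

definition capped_cyc_dist :: "nat \<Rightarrow> nat \<Rightarrow> nat \<Rightarrow> int" where
  "capped_cyc_dist d s v = min (int d) (min \<bar>int v - int s\<bar> (3 * int d - \<bar>int v - int s\<bar>))"

text \<open>A lower bound on the distance from w_i that changes by at most 1 along every edge.\<close>
definition dist_w :: "nat \<Rightarrow> nat \<Rightarrow> nat \<Rightarrow> int" where
  "dist_w d i v =
     (if v < 3*d then capped_cyc_dist d (d*i) v + 1 else if v = 3*d + i then 0 else int d + 2)"

lemma capped_cyc_dist_Suc: "\<bar>capped_cyc_dist d s (Suc v) - capped_cyc_dist d s v\<bar> \<le> 1"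
  unfolding capped_cyc_dist_def by linarith

lemma capped_cyc_dist_wrap:
  assumes "0 < d" and "i < 3" and "Suc v = 3*d"
  shows "\<bar>capped_cyc_dist d (d*i) v - capped_cyc_dist d (d*i) 0\<bar> \<le> 1"
proof -
  have "i = 0 \<or> i = 1 \<or> i = 2"
    using assms by auto
  moreover have "int v = 3 * int d - 1"
    using assms(3) by linarith
  ultimately show ?thesis
    using assms(1) by (auto simp: capped_cyc_dist_def)
qed

lemma capped_cyc_dist_sites:
  assumes "i < 3" and "i' < 3"
  shows "capped_cyc_dist d (d*i) (d*i') = (if i = i' then 0 else int d)"
proof -
  have "i = 0 \<or> i = 1 \<or> i = 2" "i' = 0 \<or> i' = 1 \<or> i' = 2"
    using assms by auto
  then show ?thesis
    by (auto simp: capped_cyc_dist_def)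
qed

lemma dist_w_adj:
  assumes d: "0 < d" and i: "i < 3" and adj: "net_adj d u v"
  shows "dist_w d i v \<le> dist_w d i u + 1"
proof (cases "u < 3*d \<and> v < 3*d")
  case True
  then have "v = Suc u mod (3*d) \<or> u = Suc v mod (3*d)"
    using adj by (auto simp: net_adj_def)
  then have "\<bar>capped_cyc_dist d (d*i) v - capped_cyc_dist d (d*i) u\<bar> \<le> 1"
    using True capped_cyc_dist_Suc[of d "d*i" u] capped_cyc_dist_Suc[of d "d*i" v]
      capped_cyc_dist_wrap[OF d i, of u] capped_cyc_dist_wrap[OF d i, of v]
    by (auto simp: mod_Suc abs_minus_commute split: if_split_asm)
  then show ?thesis
    using True by (simp add: dist_w_def)
next
  case False
  then obtain i' where i': "i' < 3" and "(u = d * i' \<and> v = 3*d + i') \<or> (v = d * i' \<and> u = 3*d + i')"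
    using adj unfolding net_adj_def by blast
  moreover have "i' = 0 \<or> i' = 1 \<or> i' = 2"
    using i' by auto
  ultimately show ?thesis
    using d i capped_cyc_dist_sites[OF i i'] by (auto simp: dist_w_def)
qed

text \<open>The cycle is split into three regions; region k is the part within distance d/2 of v_(dk),
  so it is out of reach of w_i for i \<noteq> k within d/2 rounds.\<close>
definition region :: "nat \<Rightarrow> nat \<Rightarrow> nat" where
  "region d j = (if 2*j < d \<or> 5*d \<le> 2*j then 0 else if 2*j < 3*d then 1 else 2)"

lemma region_cases: "region d j = 0 \<or> region d j = 1 \<or> region d j = 2"
  by (simp add: region_def)

lemma dist_w_gt_if_other_region:
  assumes "j < 3*d" and "i < 3" and "i \<noteq> region d j" and "2*T \<le> d"
  shows "int T < dist_w d i j"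
proof -
  have "i = 0 \<or> i = 1 \<or> i = 2"
    using assms by auto
  then have "d \<le> 2 * capped_cyc_dist d (d*i) j"
    using assms unfolding region_def capped_cyc_dist_def by (auto simp: min_def split: if_splits)
  then show ?thesis
    using assms by (simp add: dist_w_def)
qed

lemma crun_change_one_input:
  assumes "0 < d" and "j < 3*d" and "2*T \<le> d" and "i < 3"
    and "region d j = i \<Longrightarrow> inp (3*d + i) = inp' (3*d + i)"
    and "\<And>v. v \<noteq> 3*d + i \<Longrightarrow> inp v = inp' v"
  shows "crun d init msg upd inp r T j = crun d init msg upd inp' r T j"
proof (cases "region d j = i")
  case True
  then have "inp v = inp' v" for v
    using assms(5,6) by (cases "v = 3*d + i") auto
  then have "inp = inp'" ..
  then show ?thesis by simp
next
  case False
  show ?thesis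
  proof (rule crun_eq_if_far[where D = "dist_w d i"])
    show "dist_w d i v \<le> dist_w d i u + 1" if "net_adj d u v" for u v
      using dist_w_adj[OF assms(1,4) that] .
    show "dist_w d i v \<le> 0" if "inp v \<noteq> inp' v" for v
    proof -
      have "v = 3*d + i"
        using assms(6) that by blast
      then show ?thesis by (simp add: dist_w_def)
    qed
    show "int T < dist_w d i j"
      using dist_w_gt_if_other_region[OF assms(2,4)] False assms(3) by simp
  qed
qed

lemma crun_eq_if_region_inputs_eq:
  assumes "0 < d" and "j < 3*d" and "2*T \<le> d"
    and "region d j = 0 \<Longrightarrow> b0 = b0'" "region d j = 1 \<Longrightarrow> b1 = b1'" "region d j = 2 \<Longrightarrow> b2 = b2'"
  shows "crun d init msg upd (net_input d b0 b1 b2) r T j = crun d init msg upd (net_input d b0' b1' b2') r T j"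
proof -
  have "crun d init msg upd (net_input d b0 b1 b2) r T j = crun d init msg upd (net_input d b0' b1 b2) r T j"
    by (rule crun_change_one_input[where i = 0]) (use assms in \<open>auto simp: net_input_def\<close>)
  also have "\<dots> = crun d init msg upd (net_input d b0' b1' b2) r T j"
    by (rule crun_change_one_input[where i = 1]) (use assms in \<open>auto simp: net_input_def\<close>)
  also have "\<dots> = crun d init msg upd (net_input d b0' b1' b2') r T j"
    by (rule crun_change_one_input[where i = 2]) (use assms in \<open>auto simp: net_input_def\<close>)
  finally show ?thesis .
qed

section \<open>The classical bound\<close>

lemma overlap_eq_sum: "overlap n m a = (\<Sum>q<n. of_bool (m q \<and> a q))"
  by (simp add: overlap_def of_bool_def sum.inter_filter[symmetric])

text \<open>The names m_b0b1b2 refer to the outputs at site q on the inputs of the parity lemmas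
  overlap_even_sites (000), overlap_arc_sites (110, 011, 101) and overlap_odd_sites (111).\<close>
lemma site_contribution_even:
  fixes m000 m110 m011 m101 m111 :: bool
  assumes "even d" and "0 < d" and "q < 3*d"
    and "region d q = 0 \<Longrightarrow> m000 = m011 \<and> m110 = m101 \<and> m101 = m111"
    and "region d q = 1 \<Longrightarrow> m000 = m101 \<and> m110 = m011 \<and> m011 = m111"
    and "region d q = 2 \<Longrightarrow> m000 = m110 \<and> m101 = m011 \<and> m011 = m111"
  shows "even (of_bool (m000 \<and> even_sites d q) + of_bool (m110 \<and> arc_sites d 0 q) +
    of_bool (m011 \<and> arc_sites d 1 q) + of_bool (m101 \<and> arc_sites d 2 q) +
    of_bool (m111 \<and> odd_sites d q) :: nat)"
proof (cases "even q")
  case True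
  then have "even_sites d q" "arc_sites d 0 q" "arc_sites d 1 q" "arc_sites d 2 q" "\<not> odd_sites d q"
    using assms(3) by (simp_all add: even_sites_def arc_sites_def odd_sites_def)
  then show ?thesis
    using assms(4-6) region_cases[of d q] by auto
next
  case False
  then have "q \<noteq> d" "q \<noteq> 2*d"
    using assms(1) by auto
  with False assms(3) have arcs: "\<not> even_sites d q" "odd_sites d q" "arc_sites d 0 q \<longleftrightarrow> q < d"
      "arc_sites d 1 q \<longleftrightarrow> d < q \<and> q < 2*d" "arc_sites d 2 q \<longleftrightarrow> 2*d < q"
    by (auto simp: even_sites_def arc_sites_def odd_sites_def intro: odd_pos)
  consider "region d q = 0" "q < d \<or> 2*d < q" | "region d q = 1" "q < 2*d" | "region d q = 2" "d < q"
    using region_cases[of d q] \<open>q \<noteq> d\<close> \<open>q \<noteq> 2*d\<close> by (auto simp: region_def split: if_splits)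
  then show ?thesis
    using assms(4-6) arcs \<open>q \<noteq> d\<close> \<open>q \<noteq> 2*d\<close> by cases auto
qed


lemma sum_overlaps_even:
  fixes M :: "bool \<Rightarrow> bool \<Rightarrow> bool \<Rightarrow> bits"
  assumes "even d" and "0 < d"
    and local: "\<And>q b0 b1 b2 b0' b1' b2'. q < 3*d \<Longrightarrow> (region d q = 0 \<Longrightarrow> b0 = b0') \<Longrightarrow>
      (region d q = 1 \<Longrightarrow> b1 = b1') \<Longrightarrow> (region d q = 2 \<Longrightarrow> b2 = b2') \<Longrightarrow>
      M b0 b1 b2 q = M b0' b1' b2' q"
  shows "even (overlap (3*d) (M False False False) (even_sites d) +
    overlap (3*d) (M True True False) (arc_sites d 0) + overlap (3*d) (M False True True) (arc_sites d 1) +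
    overlap (3*d) (M True False True) (arc_sites d 2) + overlap (3*d) (M True True True) (odd_sites d))"
proof -
  have "even (of_bool (M False False False q \<and> even_sites d q) + of_bool (M True True False q \<and> arc_sites d 0 q) +
      of_bool (M False True True q \<and> arc_sites d 1 q) + of_bool (M True False True q \<and> arc_sites d 2 q) +
      of_bool (M True True True q \<and> odd_sites d q) :: nat)" if "q < 3*d" for q
    by (rule site_contribution_even[OF assms(1,2) that]; intro conjI; rule local[OF that]; simp)
  then show ?thesis
    unfolding overlap_eq_sum sum.distrib[symmetric] by (auto intro: dvd_sum)
qed

definition hard_inputs :: "(bool \<times> bool \<times> bool) set" where
  "hard_inputs = {(False, False, False), (True, True, False), (False, True, True), (True, False, True),
     (True, True, True)}"

lemma card_hard_inputs: "card hard_inputs = 5"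
  by (simp add: hard_inputs_def)

lemma no_run_valid_on_all_hard_inputs:
  assumes "even d" and "0 < d" and "2*T \<le> d"
  shows "\<exists>b0 b1 b2. (b0, b1, b2) \<in> hard_inputs \<and>
    coutput d T init msg upd out (net_input d b0 b1 b2) r \<notin> Lambda d b0 b1 b2"
proof (rule ccontr)
  define M where "M b0 b1 b2 = coutput d T init msg upd out (net_input d b0 b1 b2) r" for b0 b1 b2
  assume "\<not> ?thesis"
  then have valid: "M b0 b1 b2 \<in> Lambda d b0 b1 b2" if "(b0, b1, b2) \<in> hard_inputs" for b0 b1 b2
    using that by (simp add: M_def)
  have "M b0 b1 b2 q = M b0' b1' b2' q"
    if "q < 3*d" "region d q = 0 \<Longrightarrow> b0 = b0'" "region d q = 1 \<Longrightarrow> b1 = b1'" "region d q = 2 \<Longrightarrow> b2 = b2'"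
    for q b0 b1 b2 b0' b1' b2'
  proof -
    have "crun d init msg upd (net_input d b0 b1 b2) r T q = crun d init msg upd (net_input d b0' b1' b2') r T q"
      by (rule crun_eq_if_region_inputs_eq[OF assms(2) that(1) assms(3) that(2-4)])
    then show ?thesis by (simp add: M_def coutput_def)
  qed
  then have "even (overlap (3*d) (M False False False) (even_sites d) +
      overlap (3*d) (M True True False) (arc_sites d 0) + overlap (3*d) (M False True True) (arc_sites d 1) +
      overlap (3*d) (M True False True) (arc_sites d 2) + overlap (3*d) (M True True True) (odd_sites d))"
    by (rule sum_overlaps_even[OF assms(1,2)])
  moreover have "even (overlap (3*d) (M False False False) (even_sites d))"
    by (rule overlap_even_sites[OF assms(1,2) valid]) (simp add: hard_inputs_def)
  moreover have "odd (overlap (3*d) (M True True False) (arc_sites d 0))"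
    using overlap_arc_sites[OF assms(1,2), of 0] valid by (simp add: hard_inputs_def)
  moreover have "odd (overlap (3*d) (M False True True) (arc_sites d 1))"
    using overlap_arc_sites[OF assms(1,2), of 1] valid by (simp add: hard_inputs_def)
  moreover have "odd (overlap (3*d) (M True False True) (arc_sites d 2))"
    using overlap_arc_sites[OF assms(1,2), of 2] valid by (simp add: hard_inputs_def)
  moreover have "even (overlap (3*d) (M True True True) (odd_sites d))"
    by (rule overlap_odd_sites[OF assms(1,2) valid]) (simp add: hard_inputs_def)
  ultimately show False by simp
qed

lemma (in prob_space) ex_prob_le_if_no_common_point:
  assumes "finite I" and "I \<noteq> {}" and "\<And>i. i \<in> I \<Longrightarrow> E i \<in> events"
    and "\<And>x. x \<in> space M \<Longrightarrow> \<exists>i\<in>I. x \<notin> E i"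
  shows "\<exists>i\<in>I. prob (E i) \<le> 1 - 1 / card I"
proof (rule ccontr)
  assume "\<not> ?thesis"
  then have large: "1 - 1 / card I < prob (E i)" if "i \<in> I" for i
    using that by auto
  have "1 = prob (space M)"
    by (simp add: prob_space)
  also have "\<dots> \<le> prob (\<Union>i\<in>I. space M - E i)"
  proof (rule finite_measure_mono)
    show "space M \<subseteq> (\<Union>i\<in>I. space M - E i)"
      using assms(4) by blast
    show "(\<Union>i\<in>I. space M - E i) \<in> events"
      using assms(1,3) by (intro sets.finite_UN sets.Diff sets.top)
  qed
  also have "\<dots> \<le> (\<Sum>i\<in>I. prob (space M - E i))"
    using assms by (intro finite_measure_subadditive_finite) auto
  also have "\<dots> = (\<Sum>i\<in>I. 1 - prob (E i))"
    using assms(3) by (simp add: prob_compl)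
  also have "\<dots> < (\<Sum>i\<in>I. 1 / card I)"
  proof (rule sum_strict_mono)
    show "1 - prob (E i) < 1 / card I" if "i \<in> I" for i
      using large[OF that] by linarith
  qed (use assms(1,2) in auto)
  also have "\<dots> = 1"
    using assms(1,2) by simp
  finally show False by simp
qed

lemma classical_success_prob_le:
  assumes "even d" and "0 < d" and "2*T \<le> d" and "prob_space R"
    and "\<And>b0 b1 b2. csuccess_event d T R init msg upd out b0 b1 b2 \<in> sets R"
  shows "\<exists>b0 b1 b2. measure R (csuccess_event d T R init msg upd out b0 b1 b2) \<le> 4 / 5"
proof -
  interpret R: prob_space R by fact
  let ?E = "\<lambda>(b0, b1, b2). csuccess_event d T R init msg upd out b0 b1 b2"
  have "\<exists>b\<in>hard_inputs. R.prob (?E b) \<le> 1 - 1 / card hard_inputs"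
  proof (rule R.ex_prob_le_if_no_common_point)
    fix r
    obtain b0 b1 b2 where "(b0, b1, b2) \<in> hard_inputs"
      and "coutput d T init msg upd out (net_input d b0 b1 b2) r \<notin> Lambda d b0 b1 b2"
      using no_run_valid_on_all_hard_inputs[OF assms(1-3), where init = init and msg = msg
          and upd = upd and out = out and r = r] by blast
    then show "\<exists>b\<in>hard_inputs. r \<notin> ?E b"
      by (intro bexI[of _ "(b0, b1, b2)"]) (auto simp: csuccess_event_def)
  qed (use assms(5) in \<open>auto simp: hard_inputs_def\<close>)
  then show ?thesis
    by (auto simp: card_hard_inputs)
qed

section \<open>The two-round quantum algorithm\<close>

text \<open>Qubits j and 3d + j (its copy) start at v_j, qubit 6d + i starts at w_i. After the first
  local step the copy 3d + j travels to v_(j-1) and qubit 6d + i to v_(di); after the second step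
  the copies return home.\<close>
definition alg_home :: "nat \<Rightarrow> nat \<Rightarrow> nat" where
  "alg_home d q = (if q < 3*d then q else if q < 6*d then q - 3*d else 3*d + (q - 6*d))"

definition alg_moves :: "nat \<Rightarrow> nat \<Rightarrow> nat \<Rightarrow> nat" where
  "alg_moves d t q =
     (if q < 3*d then q
      else if q < 6*d then (if t = 0 then cyc_prev (3*d) (q - 3*d) else q - 3*d)
      else d * (q - 6*d))"

abbreviation alg_held :: "nat \<Rightarrow> nat \<Rightarrow> nat \<Rightarrow> nat set" where
  "alg_held d t v \<equiv> held (6*d + 3) (alg_home d) (alg_moves d) t v"

definition cnot_bits :: "nat \<Rightarrow> nat \<Rightarrow> bits \<Rightarrow> bits" where
  "cnot_bits c t a = a(t := (a t \<noteq> a c))"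

definition flip_bit :: "nat \<Rightarrow> bits \<Rightarrow> bits" where
  "flip_bit k a = a(k := \<not> a k)"

text \<open>The phase applied by v_v in step 1, when it holds the copy of qubit v + 1 and, if v = di,
  the input qubit of w_i: the CZ of the edge {v, v + 1} and the S gate controlled by the input.\<close>
definition step1_phase :: "nat \<Rightarrow> nat \<Rightarrow> bits \<Rightarrow> complex" where
  "step1_phase d v a = phase_Z (a v \<and> a (3*d + cyc_next (3*d) v)) *
     phase_S (v = 0 \<and> a (6*d) \<and> a v) * phase_S (v = d \<and> a (6*d + 1) \<and> a v) *
     phase_S (v = 2*d \<and> a (6*d + 2) \<and> a v)"

definition alg_unitary :: "nat \<Rightarrow> nat \<Rightarrow> nat \<Rightarrow> bool \<Rightarrow> qop" where
  "alg_unitary d t v b =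
    (if t = 0 then
       (if v < 3*d then qop_comp (alg_held d 0 v) (perm_op (cnot_bits v (3*d + v))) (hadamard_op (alg_held d 0 v) v)
        else if v < 3*d + 3 \<and> b then perm_op (flip_bit (6*d + (v - 3*d))) else id_op)
     else if t = 1 then (if v < 3*d then diag_op (step1_phase d v) else id_op)
     else (if v < 3*d then qop_comp (alg_held d 2 v) (hadamard_op (alg_held d 2 v) v) (hadamard_op (alg_held d 2 v) (3*d + v))
           else id_op))"

definition alg_out :: "nat \<Rightarrow> nat \<Rightarrow> bits \<Rightarrow> bool" where
  "alg_out d j a \<longleftrightarrow> a j \<noteq> a (3*d + j)"

lemma qloc_alg:
  "qloc (alg_home d) (alg_moves d) 0 q = alg_home d q"
  "qloc (alg_home d) (alg_moves d) (Suc t) q = alg_moves d t q"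
  by (simp_all add: qloc_def)

lemma finite_held: "finite (held N home mv t v)"
  by (rule finite_subset[of _ "{..<N}"]) (auto simp: held_def)

lemma alg_held_0:
  assumes "v < 3*d"
  shows "v \<in> alg_held d 0 v" "3*d + v \<in> alg_held d 0 v"
  using assms by (auto simp: held_def qloc_alg alg_home_def)

lemma alg_held_0_input: "i < 3 \<Longrightarrow> 6*d + i \<in> alg_held d 0 (3*d + i)"
  by (auto simp: held_def qloc_alg alg_home_def)

lemma alg_held_1:
  assumes "v < 3*d"
  shows "v \<in> alg_held d 1 v" "3*d + cyc_next (3*d) v \<in> alg_held d 1 v"
    "i < 3 \<Longrightarrow> v = d*i \<Longrightarrow> 6*d + i \<in> alg_held d 1 v"
  using assms by (auto simp: held_def qloc_def alg_moves_def cyc_prev_def cyc_next_eq)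

lemma alg_held_2:
  assumes "v < 3*d"
  shows "v \<in> alg_held d 2 v" "3*d + v \<in> alg_held d 2 v"
  using assms by (auto simp: held_def qloc_def alg_moves_def)

lemma alg_moves_adjacent:
  assumes "0 < d" and "t < 2" and "q < 6*d + 3"
  shows "alg_moves d t q = qloc (alg_home d) (alg_moves d) t q \<or>
    net_adj d (qloc (alg_home d) (alg_moves d) t q) (alg_moves d t q)"
proof -
  consider "q < 3*d" | j where "3*d \<le> q" "q < 6*d" "j = q - 3*d" | i where "6*d \<le> q" "i = q - 6*d"
    by fastforce
  then show ?thesis
  proof cases
    case 2
    then have "j < 3*d" by linarith
    then have "net_adj d j (cyc_prev (3*d) j)" "net_adj d (cyc_prev (3*d) j) j"
      using assms(1) by (auto simp: net_adj_def cyc_prev_def)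
    then show ?thesis
      using 2 assms(2) by (auto simp: qloc_def alg_moves_def alg_home_def less_2_cases_iff)
  next
    case 3
    then have "i < 3" using assms(3) by linarith
    then have "net_adj d (3*d + i) (d * i)"
      unfolding net_adj_def by blast
    then show ?thesis
      using 3 assms(2) by (auto simp: qloc_def alg_moves_def alg_home_def less_2_cases_iff)
  qed (auto simp: qloc_def alg_moves_def alg_home_def)
qed

lemma cnj_mult_self_step1_phase: "cnj (step1_phase d v a) * step1_phase d v a = 1"
proof -
  have "cnj (phase_Z b) * phase_Z b = 1" "cnj (phase_S b) * phase_S b = 1" for b
    by (simp_all add: phase_Z_def phase_S_def)
  then show ?thesis
    by (simp add: step1_phase_def mult_ac)
qed

lemma unitary_on_alg_unitary:
  assumes "t \<le> 2"
  shows "unitary_on (alg_held d t v) (alg_unitary d t v b)"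
proof (cases "v < 3*d")
  case True
  have "t = 0 \<or> t = 1 \<or> t = 2"
    using assms by auto
  then show ?thesis
    using True alg_held_0[OF True] alg_held_2[OF True] finite_held cnj_mult_self_step1_phase
    by (auto simp: alg_unitary_def cnot_bits_def conf_def fun_eq_iff
        intro!: unitary_on_qop_comp unitary_on_hadamard_op unitary_on_perm_op unitary_on_diag_op)
next
  case False
  have "6*d + (v - 3*d) \<in> alg_held d 0 v" if "v < 3*d + 3"
    using alg_held_0_input[of "v - 3*d" d] False that by simp
  then show ?thesis
    using False finite_held
    by (auto simp: alg_unitary_def flip_bit_def conf_def fun_eq_iff
        intro!: unitary_on_perm_op unitary_on_id_op)
qed

lemma alg_valid: "0 < d \<Longrightarrow> qlocal_valid d 2 (6*d + 3) (alg_home d) (alg_moves d) (alg_unitary d)"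
  unfolding qlocal_valid_def
  by (auto simp: alg_home_def net_nodes_def alg_moves_adjacent unitary_on_alg_unitary)

lemma override_on_restr_upd:
  "k \<in> S \<Longrightarrow> override_on x ((restr x S)(k := v)) S = x(k := v)"
  by (auto simp: override_on_def restr_def)

lemma apply_alg_unitary_0_cycle:
  assumes v: "v < 3*d"
  shows "apply_on (alg_held d 0 v) (alg_unitary d 0 v b) \<psi> =
    (\<lambda>x. apply_H v \<psi> (x(3*d + v := (x (3*d + v) \<noteq> x v))))"
proof
  fix x
  let ?S = "alg_held d 0 v"
  have S: "v \<in> ?S" "3*d + v \<in> ?S"
    using alg_held_0[OF v] by auto
  have "apply_on ?S (alg_unitary d 0 v b) \<psi> x = apply_on ?S (perm_op (cnot_bits v (3*d + v))) (apply_H v \<psi>) x"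
    using v S by (simp add: alg_unitary_def apply_on_qop_comp apply_on_hadamard_op finite_held)
  also have "\<dots> = apply_H v \<psi> (override_on x (cnot_bits v (3*d + v) (restr x ?S)) ?S)"
    using S by (intro apply_on_perm_op finite_held) (auto simp: cnot_bits_def conf_def)
  also have "override_on x (cnot_bits v (3*d + v) (restr x ?S)) ?S = x(3*d + v := (x (3*d + v) \<noteq> x v))"
    using S by (simp add: cnot_bits_def restr_apply_in override_on_restr_upd)
  finally show "apply_on ?S (alg_unitary d 0 v b) \<psi> x = apply_H v \<psi> (x(3*d + v := (x (3*d + v) \<noteq> x v)))" .
qed

definition flip_if :: "bool \<Rightarrow> nat \<Rightarrow> bits \<Rightarrow> bits" where
  "flip_if b k x = (if b then x(k := \<not> x k) else x)"

lemma apply_alg_unitary_0_input: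
  assumes i: "i < 3"
  shows "apply_on (alg_held d 0 (3*d + i)) (alg_unitary d 0 (3*d + i) b) \<psi> = (\<lambda>x. \<psi> (flip_if b (6*d + i) x))"
proof (cases b)
  case True
  let ?S = "alg_held d 0 (3*d + i)"
  have S: "6*d + i \<in> ?S"
    using alg_held_0_input[OF i] .
  have "apply_on ?S (perm_op (flip_bit (6*d + i))) \<psi> x = \<psi> (x(6*d + i := \<not> x (6*d + i)))" for x
    using S by (subst apply_on_perm_op)
      (auto simp: finite_held flip_bit_def conf_def restr_apply_in override_on_restr_upd)
  then show ?thesis
    using i True by (simp add: alg_unitary_def flip_if_def fun_eq_iff)
qed (use i in \<open>simp add: alg_unitary_def flip_if_def apply_on_id_op finite_held\<close>)

text \<open>The support of the state after v_0, ..., v_(k-1) have each created the Bell pair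
  of qubits j and 3d + j.\<close>
definition bell_pairs :: "nat \<Rightarrow> nat \<Rightarrow> bits \<Rightarrow> bool" where
  "bell_pairs d k x \<longleftrightarrow> (\<forall>q. x q \<longrightarrow> q < k \<or> 3*d \<le> q \<and> q < 3*d + k) \<and> (\<forall>j<k. x (3*d + j) = x j)"

lemma bell_pairs_Suc:
  assumes "k < 3*d"
  shows "bell_pairs d k ((x(3*d + k := (x (3*d + k) \<noteq> x k)))(k := False)) \<longleftrightarrow> bell_pairs d (Suc k) x"
  using assms unfolding bell_pairs_def
  by (auto simp: less_Suc_eq)


lemma fold_alg_step_0_cycle:
  "k \<le> 3*d \<Longrightarrow> fold (\<lambda>v. apply_on (alg_held d 0 v) (alg_unitary d 0 v (inp v))) [0..<k] ket0 =
    (\<lambda>x. inv_sqrt2 ^ k * of_bool (bell_pairs d k x))"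
proof (induction k)
  case 0
  then show ?case by (auto simp: bell_pairs_def ket0_def fun_eq_iff)
next
  case (Suc k)
  then have k: "k < 3*d" by simp
  have no_bell: "\<not> bell_pairs d k (y(k := True))" for y
    using k by (auto simp: bell_pairs_def dest: spec[of _ k])
  have "apply_H k (\<lambda>x. inv_sqrt2 ^ k * of_bool (bell_pairs d k x)) (x(3*d + k := (x (3*d + k) \<noteq> x k))) =
      inv_sqrt2 ^ Suc k * of_bool (bell_pairs d (Suc k) x)" for x
    unfolding apply_H_eq using no_bell bell_pairs_Suc[OF k, of x] by simp
  then show ?case
    using Suc k by (simp add: apply_alg_unitary_0_cycle)
qed

definition copies_agree :: "nat \<Rightarrow> bits \<Rightarrow> bool" where
  "copies_agree d x \<longleftrightarrow> (\<forall>j<3*d. x (3*d + j) = x j)"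

definition inputs_loaded :: "nat \<Rightarrow> bool \<Rightarrow> bool \<Rightarrow> bool \<Rightarrow> bits \<Rightarrow> bool" where
  "inputs_loaded d b0 b1 b2 x \<longleftrightarrow>
     (\<forall>q\<ge>6*d. x q \<longleftrightarrow> q = 6*d \<and> b0 \<or> q = 6*d + 1 \<and> b1 \<or> q = 6*d + 2 \<and> b2)"

definition step0_state :: "nat \<Rightarrow> bool \<Rightarrow> bool \<Rightarrow> bool \<Rightarrow> qstate" where
  "step0_state d b0 b1 b2 x = inv_sqrt2 ^ (3*d) * of_bool (inputs_loaded d b0 b1 b2 x \<and> copies_agree d x)"

lemma flip_inputs:
  "flip_if b0 (6*d) (flip_if b1 (6*d + 1) (flip_if b2 (6*d + 2) x)) =
    (\<lambda>q. x q \<noteq> (q = 6*d \<and> b0 \<or> q = 6*d + 1 \<and> b1 \<or> q = 6*d + 2 \<and> b2))"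
  by (auto simp: flip_if_def)

lemma bell_pairs_flip_inputs:
  "bell_pairs d (3*d) (flip_if b0 (6*d) (flip_if b1 (6*d + 1) (flip_if b2 (6*d + 2) x))) \<longleftrightarrow>
    inputs_loaded d b0 b1 b2 x \<and> copies_agree d x"
proof -
  define I where "I q \<longleftrightarrow> q = 6*d \<and> b0 \<or> q = 6*d + 1 \<and> b1 \<or> q = 6*d + 2 \<and> b2" for q
  have r: "q < 3*d \<or> 3*d \<le> q \<and> q < 3*d + 3*d \<longleftrightarrow> q < 6*d" for q
    by linarith
  have support: "(\<forall>q. (x q \<noteq> I q) \<longrightarrow> q < 6*d) \<longleftrightarrow> (\<forall>q\<ge>6*d. x q \<longleftrightarrow> I q)"
    by (auto simp: not_le[symmetric])
  have "q < 6*d \<Longrightarrow> \<not> I q" for q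
    by (simp add: I_def)
  moreover have "inputs_loaded d b0 b1 b2 x \<longleftrightarrow> (\<forall>q\<ge>6*d. x q \<longleftrightarrow> I q)"
    by (simp add: inputs_loaded_def I_def)
  ultimately show ?thesis
    unfolding flip_inputs bell_pairs_def r I_def[symmetric] support copies_agree_def by auto
qed

lemma qstep_alg_0:
  "qstep d (6*d + 3) (alg_home d) (alg_moves d) (alg_unitary d) (net_input d b0 b1 b2) 0 ket0 =
    step0_state d b0 b1 b2"
proof -
  let ?F = "\<lambda>v. apply_on (alg_held d 0 v) (alg_unitary d 0 v (net_input d b0 b1 b2 v))"
  have "[0..<3*d + 3] = [0..<3*d] @ [3*d, 3*d + 1, 3*d + 2]"
    by (simp add: numeral_3_eq_3)
  then have "fold ?F [0..<3*d + 3] ket0 = ?F (3*d + 2) (?F (3*d + 1) (?F (3*d) (fold ?F [0..<3*d] ket0)))"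
    by simp
  also have "\<dots> = (\<lambda>x. inv_sqrt2 ^ (3*d) *
      of_bool (bell_pairs d (3*d) (flip_if b0 (6*d) (flip_if b1 (6*d + 1) (flip_if b2 (6*d + 2) x)))))"
    using apply_alg_unitary_0_input[of 0 d] apply_alg_unitary_0_input[of 1 d] apply_alg_unitary_0_input[of 2 d]
    by (simp add: fold_alg_step_0_cycle net_input_def)
  finally show ?thesis
    by (simp only: qstep_def bell_pairs_flip_inputs step0_state_def[abs_def])
qed


lemma fold_diagonal:
  assumes "\<And>v \<psi>. v \<in> set L \<Longrightarrow> F v \<psi> = (\<lambda>x. p v x * \<psi> x)"
  shows "fold F L \<psi> x = (\<Prod>v\<leftarrow>L. p v x) * (\<psi> x :: complex)"
  using assms by (induction L arbitrary: \<psi>) (simp_all add: mult_ac)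

lemma apply_alg_unitary_1:
  "apply_on (alg_held d 1 v) (alg_unitary d 1 v b) \<psi> =
    (\<lambda>x. (if v < 3*d then step1_phase d v x else 1) * \<psi> x)"
proof (cases "v < 3*d")
  case True
  have "v = 0 \<Longrightarrow> 6*d \<in> alg_held d 1 v" "v = d \<Longrightarrow> 6*d + 1 \<in> alg_held d 1 v"
    "v = 2*d \<Longrightarrow> 6*d + 2 \<in> alg_held d 1 v"
    using alg_held_1(3)[OF True, of 0] alg_held_1(3)[OF True, of 1] alg_held_1(3)[OF True, of 2]
    by (auto simp: mult.commute)
  then have "step1_phase d v (restr x (alg_held d 1 v)) = step1_phase d v x" for x
    using alg_held_1(1,2)[OF True]
    by (cases "v = 0"; cases "v = d"; cases "v = 2*d") (simp_all add: step1_phase_def restr_apply_in)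
  then show ?thesis
    using True by (simp add: alg_unitary_def apply_on_diag_op finite_held fun_eq_iff)
qed (simp add: alg_unitary_def apply_on_id_op finite_held)

lemma prod_step1_phase:
  assumes "0 < d" and "inputs_loaded d b0 b1 b2 x" and "copies_agree d x"
  shows "(\<Prod>v<3*d. step1_phase d v x) = graph_amp d b0 b1 b2 x"
proof -
  have "x (6*d) = b0" "x (6*d + 1) = b1" "x (6*d + 2) = b2"
    using assms(2) by (auto simp: inputs_loaded_def)
  moreover have "x (3*d + cyc_next (3*d) v) = x (cyc_next (3*d) v)" if "v < 3*d" for v
    using assms(3) that by (simp add: copies_agree_def)
  ultimately have "step1_phase d v x = phase_Z (x v \<and> x (cyc_next (3*d) v)) *
      (if v = 0 then phase_S (b0 \<and> x 0) else 1) * (if v = d then phase_S (b1 \<and> x d) else 1) *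
      (if v = 2*d then phase_S (b2 \<and> x (2*d)) else 1)" if "v < 3*d" for v
    using that by (auto simp: step1_phase_def phase_S_def)
  then have "(\<Prod>v<3*d. step1_phase d v x) = (\<Prod>v<3*d. phase_Z (x v \<and> x (cyc_next (3*d) v)) *
      (if v = 0 then phase_S (b0 \<and> x 0) else 1) * (if v = d then phase_S (b1 \<and> x d) else 1) *
      (if v = 2*d then phase_S (b2 \<and> x (2*d)) else 1))"
    by (intro prod.cong) simp_all
  then show ?thesis
    using assms(1) by (simp add: prod.distrib graph_amp_def)
qed

lemma qstep_alg_1:
  assumes "0 < d"
  shows "qstep d (6*d + 3) (alg_home d) (alg_moves d) (alg_unitary d) (net_input d b0 b1 b2) 1 (step0_state d b0 b1 b2) =
    (\<lambda>x. graph_amp d b0 b1 b2 x * step0_state d b0 b1 b2 x)"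
proof
  fix x
  have "(\<Prod>v\<leftarrow>[0..<3*d + 3]. if v < 3*d then step1_phase d v x else 1) = (\<Prod>v<3*d. step1_phase d v x)"
  proof -
    have "{..<3*d + 3} \<inter> {v. v < 3*d} = {..<3*d}"
      by auto
    then show ?thesis
      by (simp add: prod.distinct_set_conv_list[symmetric] atLeast0LessThan prod.If_cases)
  qed
  moreover have "fold (\<lambda>v. apply_on (alg_held d 1 v) (alg_unitary d 1 v (net_input d b0 b1 b2 v)))
      [0..<3*d + 3] (step0_state d b0 b1 b2) x =
      (\<Prod>v\<leftarrow>[0..<3*d + 3]. if v < 3*d then step1_phase d v x else 1) * step0_state d b0 b1 b2 x"
    by (rule fold_diagonal) (rule apply_alg_unitary_1)
  ultimately show "qstep d (6*d + 3) (alg_home d) (alg_moves d) (alg_unitary d) (net_input d b0 b1 b2) 1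
      (step0_state d b0 b1 b2) x = graph_amp d b0 b1 b2 x * step0_state d b0 b1 b2 x"
    unfolding qstep_def using prod_step1_phase[OF assms] by (auto simp: step0_state_def)
qed

lemma fold_alg_step_2_cycle:
  "k \<le> 3*d \<Longrightarrow> fold (\<lambda>v. apply_on (alg_held d 2 v) (alg_unitary d 2 v (inp v))) [0..<k] \<psi> =
    hadamard_transform ({..<k} \<union> {3*d..<3*d + k}) \<psi>"
proof (induction k)
  case (Suc k)
  then have k: "k < 3*d" by simp
  have "apply_on (alg_held d 2 k) (alg_unitary d 2 k b) \<phi> = apply_H k (apply_H (3*d + k) \<phi>)" for b \<phi>
    using k alg_held_2[OF k] by (simp add: alg_unitary_def apply_on_qop_comp apply_on_hadamard_op finite_held)
  moreover have "insert k (insert (3*d + k) ({..<k} \<union> {3*d..<3*d + k})) = {..<Suc k} \<union> {3*d..<3*d + Suc k}"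
    by auto
  ultimately show ?case
    using Suc k by (simp add: apply_H_hadamard_transform)
qed simp

lemma qstep_alg_2:
  "qstep d (6*d + 3) (alg_home d) (alg_moves d) (alg_unitary d) inp 2 \<psi> = hadamard_transform {..<6*d} \<psi>"
proof -
  have "[0..<3*d + 3] = [0..<3*d] @ [3*d, 3*d + 1, 3*d + 2]"
    by (simp add: numeral_3_eq_3)
  moreover have "{..<3*d} \<union> {3*d..<3*d + 3*d} = {..<6*d}"
    by auto
  ultimately show ?thesis
    using fold_alg_step_2_cycle[of "3*d" d inp \<psi>]
    by (simp add: qstep_def alg_unitary_def apply_on_id_op finite_held)
qed


definition double_bits :: "nat \<Rightarrow> bits \<Rightarrow> bits" where
  "double_bits d w = (\<lambda>q. q < 3*d \<and> w q \<or> 3*d \<le> q \<and> q < 6*d \<and> w (q - 3*d))"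

lemma double_bits_restr:
  assumes z: "z \<in> conf {..<6*d}" "copies_agree d z"
  shows "double_bits d (restr z {..<3*d}) = z"
proof
  fix q
  consider "q < 3*d" | "3*d \<le> q" "q < 6*d" | "6*d \<le> q"
    by linarith
  then show "double_bits d (restr z {..<3*d}) q = z q"
  proof cases
    case 1
    then show ?thesis by (simp add: double_bits_def restr_def)
  next
    case 2
    then have "z q = z (q - 3*d)"
      using z(2) by (auto simp: copies_agree_def dest: spec[of _ "q - 3*d"])
    moreover have "q - 3*d < 3*d"
      using 2 by linarith
    ultimately show ?thesis
      using 2 by (simp add: double_bits_def restr_def)
  next
    case 3
    moreover have "\<not> z q"
      using 3 z(1) by (simp add: conf_def)
    ultimately show ?thesis by (simp add: double_bits_def)
  qed
qed

lemma sum_copies_agree: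
  "(\<Sum>z\<in>conf {..<6*d}. if copies_agree d z then g z else 0) = (\<Sum>w\<in>conf {..<3*d}. g (double_bits d w))"
proof -
  have "(\<Sum>z\<in>conf {..<6*d}. if copies_agree d z then g z else 0) = (\<Sum>z\<in>{z\<in>conf {..<6*d}. copies_agree d z}. g z)"
    by (simp add: sum.inter_filter finite_conf)
  also have "\<dots> = (\<Sum>w\<in>conf {..<3*d}. g (double_bits d w))"
  proof (rule sum.reindex_bij_witness[where i = "double_bits d" and j = "\<lambda>z. restr z {..<3*d}"])
    fix w assume w: "w \<in> conf {..<3*d}"
    show "restr (double_bits d w) {..<3*d} = w"
      using w by (auto simp: double_bits_def restr_def conf_def fun_eq_iff)
    show "double_bits d w \<in> {z\<in>conf {..<6*d}. copies_agree d z}"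
      using w by (auto simp: double_bits_def conf_def copies_agree_def)
  qed (simp_all add: double_bits_restr)
  finally show ?thesis .
qed

lemma prod_lessThan_add:
  fixes f :: "nat \<Rightarrow> 'a::comm_monoid_mult"
  shows "(\<Prod>q<m + n. f q) = (\<Prod>q<m. f q) * (\<Prod>q<n. f (m + q))"
  by (induction n) (simp_all add: mult.assoc)

lemma prod_double_bits:
  "(\<Prod>q<6*d. phase_Z (x q \<and> double_bits d w q)) = (\<Prod>q<3*d. phase_Z ((x q \<noteq> x (3*d + q)) \<and> w q))"
proof -
  have "(\<Prod>q<6*d. phase_Z (x q \<and> double_bits d w q)) =
      (\<Prod>q<3*d. phase_Z (x q \<and> double_bits d w q)) * (\<Prod>q<3*d. phase_Z (x (3*d + q) \<and> double_bits d w (3*d + q)))"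
    using prod_lessThan_add[where m = "3*d" and n = "3*d"] by simp
  also have "\<dots> = (\<Prod>q<3*d. phase_Z (x q \<and> w q) * phase_Z (x (3*d + q) \<and> w q))"
    by (simp add: double_bits_def prod.distrib)
  also have "\<dots> = (\<Prod>q<3*d. phase_Z ((x q \<noteq> x (3*d + q)) \<and> w q))"
    by (intro prod.cong refl) (auto simp: phase_Z_def)
  finally show ?thesis .
qed

lemma alg_qoutput:
  "qoutput d (6*d + 3) (alg_home d) (alg_moves d) 2 (alg_out d) x = (\<lambda>j. j < 3*d \<and> x j \<noteq> x (3*d + j))"
  by (auto simp: qoutput_def alg_out_def restr_apply_in alg_held_2 fun_eq_iff)

lemma qrun_alg_2_eq_hadamard_transform:
  assumes "0 < d"
  shows "qrun d (6*d + 3) (alg_home d) (alg_moves d) (alg_unitary d) (net_input d b0 b1 b2) 2 =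
    hadamard_transform {..<6*d} (\<lambda>x. graph_amp d b0 b1 b2 x * step0_state d b0 b1 b2 x)"
proof -
  let ?step = "qstep d (6*d + 3) (alg_home d) (alg_moves d) (alg_unitary d) (net_input d b0 b1 b2)"
  have "qrun d (6*d + 3) (alg_home d) (alg_moves d) (alg_unitary d) (net_input d b0 b1 b2) 2 =
      ?step 2 (?step 1 (?step 0 ket0))"
    by (simp add: numeral_2_eq_2)
  also have "\<dots> = hadamard_transform {..<6*d} (\<lambda>x. graph_amp d b0 b1 b2 x * step0_state d b0 b1 b2 x)"
    unfolding qstep_alg_0 qstep_alg_1[OF assms] qstep_alg_2 ..
  finally show ?thesis .
qed

lemma phase_graph_amp_step0_state:
  assumes "0 < d"
  shows "(\<Prod>q<6*d. phase_Z (x q \<and> z q)) *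
      (graph_amp d b0 b1 b2 (override_on x z {..<6*d}) * step0_state d b0 b1 b2 (override_on x z {..<6*d})) =
    inv_sqrt2 ^ (3*d) * of_bool (inputs_loaded d b0 b1 b2 x) *
      (if copies_agree d z then (\<Prod>q<6*d. phase_Z (x q \<and> z q)) * graph_amp d b0 b1 b2 z else 0)"
proof -
  have "inputs_loaded d b0 b1 b2 (override_on x z {..<6*d}) \<longleftrightarrow> inputs_loaded d b0 b1 b2 x"
    "copies_agree d (override_on x z {..<6*d}) \<longleftrightarrow> copies_agree d z"
    by (auto simp: inputs_loaded_def copies_agree_def)
  moreover have "graph_amp d b0 b1 b2 (override_on x z {..<6*d}) = graph_amp d b0 b1 b2 z"
    using assms by (intro graph_amp_cong) auto
  ultimately show ?thesis
    by (simp add: step0_state_def)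
qed

lemma phase_graph_amp_double_bits:
  assumes "0 < d"
  shows "(\<Prod>q<6*d. phase_Z (x q \<and> double_bits d w q)) * graph_amp d b0 b1 b2 (double_bits d w) =
    fourier_term d b0 b1 b2 (\<lambda>j. j < 3*d \<and> x j \<noteq> x (3*d + j)) w"
proof -
  have "graph_amp d b0 b1 b2 (double_bits d w) = graph_amp d b0 b1 b2 w"
    using assms by (intro graph_amp_cong) (auto simp: double_bits_def)
  then show ?thesis
    by (simp add: prod_double_bits fourier_term_def)
qed

lemma qrun_alg_2:
  assumes "0 < d"
  shows "qrun d (6*d + 3) (alg_home d) (alg_moves d) (alg_unitary d) (net_input d b0 b1 b2) 2 x =
    inv_sqrt2 ^ (6*d) * inv_sqrt2 ^ (3*d) * of_bool (inputs_loaded d b0 b1 b2 x) *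
    (\<Sum>w\<in>conf {..<3*d}. fourier_term d b0 b1 b2 (\<lambda>j. j < 3*d \<and> x j \<noteq> x (3*d + j)) w)"
proof -
  have "qrun d (6*d + 3) (alg_home d) (alg_moves d) (alg_unitary d) (net_input d b0 b1 b2) 2 x =
      inv_sqrt2 ^ (6*d) * (\<Sum>z\<in>conf {..<6*d}. inv_sqrt2 ^ (3*d) * of_bool (inputs_loaded d b0 b1 b2 x) *
        (if copies_agree d z then (\<Prod>q<6*d. phase_Z (x q \<and> z q)) * graph_amp d b0 b1 b2 z else 0))"
    unfolding qrun_alg_2_eq_hadamard_transform[OF assms] hadamard_transform_def
      phase_graph_amp_step0_state[OF assms] by simp
  also have "\<dots> = inv_sqrt2 ^ (6*d) * inv_sqrt2 ^ (3*d) * of_bool (inputs_loaded d b0 b1 b2 x) *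
      (\<Sum>w\<in>conf {..<3*d}. (\<Prod>q<6*d. phase_Z (x q \<and> double_bits d w q)) * graph_amp d b0 b1 b2 (double_bits d w))"
    by (simp only: sum_distrib_left[symmetric] sum_copies_agree mult.assoc)
  finally show ?thesis
    unfolding phase_graph_amp_double_bits[OF assms] .
qed

lemma quantum_always_valid_2:
  assumes "0 < d"
  shows "quantum_always_valid d 2"
  unfolding quantum_always_valid_def
proof (intro exI conjI allI impI)
  show "qlocal_valid d 2 (6*d + 3) (alg_home d) (alg_moves d) (alg_unitary d)"
    using assms by (rule alg_valid)
  fix b0 b1 b2 x
  assume "qrun d (6*d + 3) (alg_home d) (alg_moves d) (alg_unitary d) (net_input d b0 b1 b2) 2 x \<noteq> 0"
  then show "qoutput d (6*d + 3) (alg_home d) (alg_moves d) 2 (alg_out d) x \<in> Lambda d b0 b1 b2"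
    unfolding qrun_alg_2[OF assms] alg_qoutput mem_Lambda_iff by (auto simp: conf_def)
qed

theorem theorem4:
  fixes d :: nat
  assumes "even d" and "d \<ge> 2"
  shows "quantum_always_valid d 2 \<and>
    (\<forall>(T::nat) (R::'r measure) (init::nat \<Rightarrow> bool \<Rightarrow> 'r \<Rightarrow> 's)
        (msg::nat \<Rightarrow> nat \<Rightarrow> nat \<Rightarrow> 's \<Rightarrow> 'm) upd out.
       2 * T \<le> d \<and> prob_space R \<and>
       (\<forall>b0 b1 b2. csuccess_event d T R init msg upd out b0 b1 b2 \<in> sets R) \<longrightarrow>
       (\<exists>b0 b1 b2. measure R (csuccess_event d T R init msg upd out b0 b1 b2) \<le> 7 / 8))"
proof -
  have d: "0 < d"
    using assms(2) by simp
  show ?thesis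
  proof (intro conjI allI impI)
    show "quantum_always_valid d 2"
      using d by (rule quantum_always_valid_2)
  next
    fix T :: nat and R :: "'r measure" and init :: "nat \<Rightarrow> bool \<Rightarrow> 'r \<Rightarrow> 's"
      and msg :: "nat \<Rightarrow> nat \<Rightarrow> nat \<Rightarrow> 's \<Rightarrow> 'm" and upd out
    assume "2 * T \<le> d \<and> prob_space R \<and> (\<forall>b0 b1 b2. csuccess_event d T R init msg upd out b0 b1 b2 \<in> sets R)"
    then obtain b0 b1 b2 where "measure R (csuccess_event d T R init msg upd out b0 b1 b2) \<le> 4 / 5"
      using classical_success_prob_le[OF assms(1) d] by blast
    then have "measure R (csuccess_event d T R init msg upd out b0 b1 b2) \<le> 7 / 8"
      by simp
    then show "\<exists>b0 b1 b2. measure R (csuccess_event d T R init msg upd out b0 b1 b2) \<le> 7 / 8"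
      by blast
  qed
qed

end
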